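(* Let $F$ be a real $p$-form. At the point $x$, in normal coordinates for $g$ centered at $x$, with the convention that $h_{ij}$ and all derivatives are evaluated at $x$ and indices run from $1$ to $n$, the following two formulas hold. For the Bochner Laplacian: $$\begin{aligned}((\nabla^*\nabla)'F)_{i_1\dots i_p}\sim{}&\sum_{j,k}h_{jk}\partial^2_{jk}F_{i_1\dots i_p}+\sum_{j,k}\big(\partial_jh_{jk}-\tfrac12\partial_kh_{jj}\big)\partial_kF_{i_1\dots i_p}\\&+\sum_{j,k}\sum_{s=1}^p(-1)^{s+1}\big(\partial_{i_s}h_{jk}+\partial_jh_{i_sk}-\partial_kh_{i_sj}\big)\partial_jF_{k\,i_1\dots\widehat{i_s}\dots i_p}\\&+\tfrac12\sum_{j,k}\sum_{s=1}^p(-1)^{s+1}\big(\partial^2_{ji_s}h_{jk}-\partial^2_{jk}h_{i_sj}+\partial^2_{jj}h_{i_sk}\big)F_{k\,i_1\dots\widehat{i_s}\dots i_p}.\end{aligned}$$ For the de Rham Laplacian: $$\begin{aligned}((\delta'd+d\delta')F)_{i_1\dots i_p}\sim{}&\sum_{j,k}h_{jk}\partial^2_{jk}F_{i_1\dots i_p}+\sum_{j,k}\big(\partial_jh_{jk}-\tfrac12\partial_kh_{jj}\big)\partial_kF_{i_1\dots i_p}\\&+\sum_{j,k}\sum_{s=1}^p(-1)^{s+1}\big(\partial_{i_s}h_{jk}+\partial_jh_{i_sk}-\partial_kh_{i_sj}\big)\partial_jF_{k\,i_1\dots\widehat{i_s}\dots i_p}\\&+\sum_{j,k}\sum_{s=1}^p(-1)^{s+1}\big(\partial^2_{i_sj}h_{jk}-\tfrac12\partial^2_{i_sk}h_{jj}\big)F_{k\,i_1\dots\widehat{i_s}\dots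 i_p}\\&+\sum_{j,k}\sum_{s=1}^p\sum_{t\ne s}(-1)^{s+t+1_{t>s}}\big(\partial^2_{i_sj}h_{i_tk}\big)F_{j\,k\,i_1\dots\widehat{i_t}\dots\widehat{i_s}\dots i_p}.\end{aligned}$$ Here $1_{t>s}$ equals $1$ if $t>s$ and $0$ otherwise, and a hat denotes omission of an index.
   Context: Let $(M,g)$ be a Riemannian $n$-manifold, $x\in M$, and $(x^1,\dots,x^n)$ normal coordinates for $g$ centered at $x$, with $\partial_i=\partial/\partial x^i$. Let $h$ be a smooth symmetric $(0,2)$-tensor field with components $h_{ij}$. For a metric-dependent operator $P$, write $P'=\frac{d}{d\alpha}\big|_{\alpha=0}P(g+\alpha h)$. Write $\delta=d^*$; since $d$ is metric-independent, $(d^*d+dd^* )'=\delta'd+d\delta'$. A real $p$-form is written $F=\sum F_{i_1\dots i_p}dx^{i_1}\otimes\dots\otimes dx^{i_p}$ with totally antisymmetric components. An expression $(\partial^\alpha h_{ij})(x)\,\partial^\beta F_{k_1\dots k_p}(x)$, with multi-indices $\alpha,\beta$, has total degree $|\alpha|+|\beta|$. $A\sim B$ means that at the point $x$, $A-B$ is a finite linear combination, with constant coefficients, of such expressions of total degree less than $2$. *)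

theory Defs
  imports "HOL-Analysis.Analysis"
begin

text \<open>Everything is in a coordinate chart U (an open subset of R^n, index type 'n),
 points are real^'n, the centre x of the normal coordinates is the origin 0.\<close>

type_synonym 'n metric = "real^'n \<Rightarrow> 'n \<Rightarrow> 'n \<Rightarrow> real"
type_synonym 'n form = "real^'n \<Rightarrow> 'n list \<Rightarrow> real"

definition pd :: "'n::finite \<Rightarrow> (real^'n \<Rightarrow> real) \<Rightarrow> real^'n \<Rightarrow> real" where
  "pd i f x = deriv (\<lambda>t. f (x + t *\<^sub>R axis i 1)) 0"

definition smooth_fun :: "(real^'n::finite \<Rightarrow> real) \<Rightarrow> (real^'n) set \<Rightarrow> bool" where
  "smooth_fun f U \<longleftrightarrow> (\<forall>ds::'n list. \<forall>x\<in>U. (foldr pd ds f) differentiable (at x))"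

definition riem_metric :: "'n::finite metric \<Rightarrow> (real^'n) set \<Rightarrow> bool" where
  "riem_metric g U \<longleftrightarrow>
     (\<forall>i j. smooth_fun (\<lambda>x. g x i j) U) \<and>
     (\<forall>x\<in>U. \<forall>i j. g x i j = g x j i) \<and>
     (\<forall>x\<in>U. \<forall>v::real^'n. v \<noteq> 0 \<longrightarrow> (\<Sum>i\<in>UNIV. \<Sum>j\<in>UNIV. g x i j * v$i * v$j) > 0)"

definition ginv :: "'n::finite metric \<Rightarrow> real^'n \<Rightarrow> 'n \<Rightarrow> 'n \<Rightarrow> real" where
  "ginv g x i j = matrix_inv (\<chi> a b. g x a b) $ i $ j"

definition christ :: "'n::finite metric \<Rightarrow> real^'n \<Rightarrow> 'n \<Rightarrow> 'n \<Rightarrow> 'n \<Rightarrow> real" where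
  "christ g x l j k = (1/2) * (\<Sum>m\<in>UNIV. ginv g x l m *
      (pd j (\<lambda>y. g y m k) x + pd k (\<lambda>y. g y j m) x - pd m (\<lambda>y. g y j k) x))"

text \<open>Normal coordinates for g centred at 0: g_{ij}(0) = \<delta>_{ij} and the radial lines
  t \<mapsto> t v are geodesics (geodesic equation \<Gamma>^l_{jk}(tv) v^j v^k = 0).\<close>
definition normal_coords :: "'n::finite metric \<Rightarrow> (real^'n) set \<Rightarrow> bool" where
  "normal_coords g U \<longleftrightarrow> open U \<and> 0 \<in> U \<and> riem_metric g U \<and>
     (\<forall>i j. g 0 i j = (if i = j then 1 else 0)) \<and>
     (\<forall>v::real^'n. \<forall>t::real. \<forall>l. t *\<^sub>R v \<in> U \<longrightarrow>
        (\<Sum>j\<in>UNIV. \<Sum>k\<in>UNIV. christ g (t *\<^sub>R v) l j k * v$j * v$k) = 0)"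

definition sym_tensor :: "'n::finite metric \<Rightarrow> (real^'n) set \<Rightarrow> bool" where
  "sym_tensor h U \<longleftrightarrow> (\<forall>i j. smooth_fun (\<lambda>x. h x i j) U) \<and> (\<forall>x\<in>U. \<forall>i j. h x i j = h x j i)"

definition pform :: "nat \<Rightarrow> 'n::finite form \<Rightarrow> (real^'n) set \<Rightarrow> bool" where
  "pform p F U \<longleftrightarrow>
     (\<forall>K. length K = p \<longrightarrow> smooth_fun (\<lambda>x. F x K) U) \<and>
     (\<forall>x\<in>U. \<forall>K. length K = p \<longrightarrow> (\<forall>a b. a < b \<and> b < p \<longrightarrow>
        F x (K[a := K!b, b := K!a]) = - F x K))"

definition del_at :: "nat \<Rightarrow> 'a list \<Rightarrow> 'a list" where
  "del_at s I = take s I @ drop (Suc s) I"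

definition del_two :: "nat \<Rightarrow> nat \<Rightarrow> 'a list \<Rightarrow> 'a list" where
  "del_two s t I = map (nth I) (filter (\<lambda>m. m \<noteq> s \<and> m \<noteq> t) [0..<length I])"

definition cov :: "'n::finite metric \<Rightarrow> 'n form \<Rightarrow> real^'n \<Rightarrow> 'n \<Rightarrow> 'n list \<Rightarrow> real" where
  "cov g F x k I = pd k (\<lambda>y. F y I) x
     - (\<Sum>s<length I. \<Sum>l\<in>UNIV. christ g x l k (I!s) * F x (I[s := l]))"

text \<open>Second covariant derivative (\<nabla>^2 F)_{j k I} = (\<nabla>(\<nabla>F))_{j (k I)}.\<close>
definition cov2 :: "'n::finite metric \<Rightarrow> 'n form \<Rightarrow> real^'n \<Rightarrow> 'n \<Rightarrow> 'n \<Rightarrow> 'n list \<Rightarrow> real" where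
  "cov2 g F x j k I = cov g (\<lambda>y L. cov g F y (hd L) (tl L)) x j (k # I)"

definition bochner :: "'n::finite metric \<Rightarrow> 'n form \<Rightarrow> real^'n \<Rightarrow> 'n list \<Rightarrow> real" where
  "bochner g F x I = - (\<Sum>j\<in>UNIV. \<Sum>k\<in>UNIV. ginv g x j k * cov2 g F x j k I)"

definition extd :: "'n::finite form \<Rightarrow> 'n form" where
  "extd F x I = (\<Sum>s<length I. (-1)^s * pd (I!s) (\<lambda>y. F y (del_at s I)) x)"

definition codiff :: "'n::finite metric \<Rightarrow> 'n form \<Rightarrow> 'n form" where
  "codiff g F x I = - (\<Sum>j\<in>UNIV. \<Sum>k\<in>UNIV. ginv g x j k * cov g F x k (j # I))"

definition gplus :: "'n::finite metric \<Rightarrow> 'n metric \<Rightarrow> real \<Rightarrow> 'n metric" where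
  "gplus g h a = (\<lambda>x i j. g x i j + a * h x i j)"

definition var :: "('n::finite metric \<Rightarrow> 'n form \<Rightarrow> 'n form) \<Rightarrow> 'n metric \<Rightarrow> 'n metric
     \<Rightarrow> 'n form \<Rightarrow> 'n form" where
  "var P g h F x I = deriv (\<lambda>a. P (gplus g h a) F x I) 0"

definition derham_var :: "'n::finite metric \<Rightarrow> 'n metric \<Rightarrow> 'n form \<Rightarrow> 'n form" where
  "derham_var g h F x I = var codiff g h (extd F) x I + extd (var codiff g h F) x I"

text \<open>Lower-order terms at 0: fixed constant-coefficient linear combination of
  h_{ij} F_K, h_{ij} \<partial>_l F_K, \<partial>_l h_{ij} F_K (total degree < 2).\<close>
definition lo_comb :: "nat \<Rightarrow> ('n::finite \<Rightarrow> 'n \<Rightarrow> 'n list \<Rightarrow> real)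
    \<Rightarrow> ('n \<Rightarrow> 'n \<Rightarrow> 'n \<Rightarrow> 'n list \<Rightarrow> real) \<Rightarrow> ('n \<Rightarrow> 'n \<Rightarrow> 'n \<Rightarrow> 'n list \<Rightarrow> real)
    \<Rightarrow> 'n metric \<Rightarrow> 'n form \<Rightarrow> real" where
  "lo_comb p c0 c1 c2 h F =
     (\<Sum>K\<in>{K. length K = p}. \<Sum>i\<in>UNIV. \<Sum>j\<in>UNIV.
        c0 i j K * h 0 i j * F 0 K
        + (\<Sum>l\<in>UNIV. c1 i j l K * h 0 i j * pd l (\<lambda>y. F y K) 0
               + c2 i j l K * pd l (\<lambda>y. h y i j) 0 * F 0 K))"

definition sim_at :: "(real^'n::finite) set \<Rightarrow> nat \<Rightarrow> ('n metric \<Rightarrow> 'n form \<Rightarrow> real)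
    \<Rightarrow> ('n metric \<Rightarrow> 'n form \<Rightarrow> real) \<Rightarrow> bool" where
  "sim_at U p A B \<longleftrightarrow> (\<exists>c0 c1 c2. \<forall>h F. sym_tensor h U \<and> pform p F U \<longrightarrow>
      A h F - B h F = lo_comb p c0 c1 c2 h F)"

text \<open>The common principal part (first three lines of both formulas), at 0, component I.\<close>
definition common_terms :: "'n::finite metric \<Rightarrow> 'n form \<Rightarrow> 'n list \<Rightarrow> real" where
  "common_terms h F I =
     (\<Sum>j\<in>UNIV. \<Sum>k\<in>UNIV. h 0 j k * pd j (pd k (\<lambda>y. F y I)) 0)
   + (\<Sum>j\<in>UNIV. \<Sum>k\<in>UNIV. (pd j (\<lambda>y. h y j k) 0 - (1/2) * pd k (\<lambda>y. h y j j) 0) * pd k (\<lambda>y. F y I) 0)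
   + (\<Sum>j\<in>UNIV. \<Sum>k\<in>UNIV. \<Sum>s<length I. (-1)^s *
        (pd (I!s) (\<lambda>y. h y j k) 0 + pd j (\<lambda>y. h y (I!s) k) 0 - pd k (\<lambda>y. h y (I!s) j) 0)
        * pd j (\<lambda>y. F y (k # del_at s I)) 0)"

text \<open>(positions s are 0-based, so (-1)^{s+1} for 1-based s becomes (-1)^s)\<close>
definition bochner_terms :: "'n::finite metric \<Rightarrow> 'n form \<Rightarrow> 'n list \<Rightarrow> real" where
  "bochner_terms h F I = common_terms h F I
   + (1/2) * (\<Sum>j\<in>UNIV. \<Sum>k\<in>UNIV. \<Sum>s<length I. (-1)^s *
        (pd j (pd (I!s) (\<lambda>y. h y j k)) 0 - pd j (pd k (\<lambda>y. h y (I!s) j)) 0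
         + pd j (pd j (\<lambda>y. h y (I!s) k)) 0) * F 0 (k # del_at s I))"

definition derham_terms :: "'n::finite metric \<Rightarrow> 'n form \<Rightarrow> 'n list \<Rightarrow> real" where
  "derham_terms h F I = common_terms h F I
   + (\<Sum>j\<in>UNIV. \<Sum>k\<in>UNIV. \<Sum>s<length I. (-1)^s *
        (pd (I!s) (pd j (\<lambda>y. h y j k)) 0 - (1/2) * pd (I!s) (pd k (\<lambda>y. h y j j)) 0)
        * F 0 (k # del_at s I))
   + (\<Sum>j\<in>UNIV. \<Sum>k\<in>UNIV. \<Sum>s<length I. \<Sum>t\<in>{..<length I} - {s}.
        (-1)^(s + t + (if t > s then 1 else 0)) *
        pd (I!s) (pd j (\<lambda>y. h y (I!t) k)) 0 * F 0 (j # k # del_two s t I))"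

end

theory Submission
  imports Defs
begin

text \<open>Both Laplacians are expressions in the inverse metric, the Christoffel symbols and coordinate
  derivatives of \<open>F\<close>, and their variations are computed from \<open>(g\<^sup>l\<^sup>m)' = - h\<^sup>l\<^sup>m\<close> and the resulting
  formula for \<open>\<Gamma>'\<close>. At the centre of normal coordinates \<open>g\<^sub>i\<^sub>j = \<delta>\<^sub>i\<^sub>j\<close> and all first derivatives
  of \<open>g\<close> vanish, so only finitely many explicit terms survive. Rearranging them with the
  antisymmetry of \<open>F\<close>, the symmetry of \<open>h\<close> and the symmetry of second partial derivatives produces
  the stated terms of total degree two; what is left is a combination of the values \<open>h\<^sub>j\<^sub>k(0) F\<^sub>K(0)\<close>
  whose coefficients are second derivatives of \<open>g\<close> at the centre.\<close>

section \<open>Derivative of the inverse matrix\<close>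

lemma matrix_inv_mult:
  fixes A :: "real^'n::finite^'n"
  assumes "invertible A"
  shows "A ** matrix_inv A = mat 1" "matrix_inv A ** A = mat 1"
  using someI_ex[OF assms[unfolded invertible_def]] unfolding matrix_inv_def by auto

lemma invertible_mat_1: "invertible (mat 1 :: real^'n::finite^'n)"
  unfolding invertible_def by (metis matrix_mul_lid)

lemma matrix_inv_mat_1: "matrix_inv (mat 1 :: real^'n::finite^'n) = mat 1"
  using matrix_inv_mult(1)[OF invertible_mat_1] by simp

lemma matrix_inv_cramer:
  fixes M :: "real^'n::finite^'n"
  assumes "invertible M"
  shows "matrix_inv M $ i $ j = det (\<chi> r c. if c = i then (if r = j then 1 else 0) else M $ r $ c) / det M"
proof -
  have d: "det M \<noteq> 0" using assms invertible_det_nz by blast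
  have "M *v (matrix_inv M *v axis j 1) = axis j 1"
    by (simp add: matrix_vector_mul_assoc matrix_inv_mult[OF assms])
  then have "matrix_inv M *v axis j 1
      = (\<chi> k. det (\<chi> r c. if c = k then (axis j 1 :: real^'n) $ r else M $ r $ c) / det M)"
    using cramer[OF d] by blast
  moreover have "(matrix_inv M *v axis j 1) $ i = matrix_inv M $ i $ j"
    by (simp add: matrix_vector_mult_def axis_def if_distrib cong: if_cong)
  moreover have "(\<chi> r c. if c = i then (axis j 1 :: real^'n) $ r else M $ r $ c)
      = (\<chi> r c. if c = i then (if r = j then 1 else 0) else M $ r $ c)"
    by (auto simp add: axis_def intro!: ext)
  ultimately show ?thesis by simp
qed

lemma differentiable_prod:
  fixes f :: "'i \<Rightarrow> real \<Rightarrow> real"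
  shows "(\<And>i. i \<in> S \<Longrightarrow> f i differentiable (at t0)) \<Longrightarrow> (\<lambda>t. \<Prod>i\<in>S. f i t) differentiable (at t0)"
proof (induction S rule: infinite_finite_induct)
  case (insert x F)
  then show ?case by (simp add: differentiable_mult)
qed auto

lemma det_differentiable:
  fixes A :: "real \<Rightarrow> real^'n::finite^'n"
  assumes "\<And>i j. (\<lambda>t. A t $ i $ j) differentiable (at t0)"
  shows "(\<lambda>t. det (A t)) differentiable (at t0)"
  unfolding det_def
  by (intro differentiable_sum ballI differentiable_mult differentiable_prod differentiable_const
      assms finite_permutations finite)

lemma eventually_invertible:
  fixes A :: "real \<Rightarrow> real^'n::finite^'n"
  assumes "\<And>i j. (\<lambda>t. A t $ i $ j) differentiable (at t0)" and "invertible (A t0)"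
  shows "eventually (\<lambda>t. invertible (A t)) (nhds t0)"
proof -
  have "isCont (\<lambda>t. det (A t)) t0"
    using det_differentiable[OF assms(1)] differentiable_imp_continuous_within by blast
  moreover have "det (A t0) \<noteq> 0" using assms(2) invertible_det_nz by blast
  ultimately have "eventually (\<lambda>t. det (A t) \<noteq> 0) (at t0)"
    using tendsto_imp_eventually_ne isCont_def by blast
  with \<open>det (A t0) \<noteq> 0\<close> show ?thesis
    unfolding eventually_nhds_conv_at by (simp add: invertible_det_nz)
qed

lemma matrix_inv_differentiable:
  fixes A :: "real \<Rightarrow> real^'n::finite^'n"
  assumes dA: "\<And>i j. (\<lambda>t. A t $ i $ j) differentiable (at t0)" and inv: "invertible (A t0)"
  shows "(\<lambda>t. matrix_inv (A t) $ i $ j) differentiable (at t0)"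
proof -
  let ?C = "\<lambda>t. det (\<chi> r c. if c = i then (if r = j then 1 else 0) else A t $ r $ c) / det (A t)"
  have "(\<lambda>t. det (\<chi> r c. if c = i then (if r = j then 1 else 0) else A t $ r $ c)) differentiable (at t0)"
  proof (rule det_differentiable)
    show "(\<lambda>t. (\<chi> r c. if c = i then (if r = j then 1 else 0) else A t $ r $ c) $ r $ c)
        differentiable (at t0)" for r c
      by (cases "c = i") (auto simp: dA)
  qed
  then have "?C differentiable (at t0)"
    using det_differentiable[OF dA] inv invertible_det_nz by (intro differentiable_divide) auto
  then have "DERIV ?C t0 :> deriv ?C t0"
    using DERIV_deriv_iff_real_differentiable by blast
  moreover have "eventually (\<lambda>t. matrix_inv (A t) $ i $ j = ?C t) (nhds t0)"
    using eventually_invertible[OF dA inv] by eventually_elim (rule matrix_inv_cramer)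
  ultimately have "DERIV (\<lambda>t. matrix_inv (A t) $ i $ j) t0 :> deriv ?C t0"
    using DERIV_cong_ev[of t0 t0 "\<lambda>t. matrix_inv (A t) $ i $ j" ?C] by simp
  then show ?thesis using real_differentiable_def by blast
qed

text \<open>The derivative is read off from differentiating \<open>A ** matrix_inv A = mat 1\<close>.\<close>

lemma DERIV_matrix_inv:
  fixes A :: "real \<Rightarrow> real^'n::finite^'n" and A' :: "real^'n^'n"
  assumes dA: "\<And>i j. ((\<lambda>t. A t $ i $ j) has_real_derivative A' $ i $ j) (at t0)"
    and inv: "invertible (A t0)"
  shows "((\<lambda>t. matrix_inv (A t) $ i $ j) has_real_derivative
            (- (matrix_inv (A t0) ** A' ** matrix_inv (A t0))) $ i $ j) (at t0)"
proof -
  define B0 where "B0 = matrix_inv (A t0)"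
  have dAd: "\<And>i j. (\<lambda>t. A t $ i $ j) differentiable (at t0)"
    using dA real_differentiable_def by blast
  obtain D where D: "\<And>i j. DERIV (\<lambda>t. matrix_inv (A t) $ i $ j) t0 :> D i j"
    using matrix_inv_differentiable[OF dAd inv] unfolding real_differentiable_def by metis
  define Dm where "Dm = (\<chi> i j. D i j)"
  have "(A' ** B0 + A t0 ** Dm) $ i $ j = 0" for i j
  proof -
    have "DERIV (\<lambda>t. \<Sum>k\<in>UNIV. A t $ i $ k * matrix_inv (A t) $ k $ j) t0 :>
        (\<Sum>k\<in>UNIV. A' $ i $ k * matrix_inv (A t0) $ k $ j + D k j * A t0 $ i $ k)"
      by (intro DERIV_sum DERIV_mult dA D)
    moreover have "eventually (\<lambda>t. (\<Sum>k\<in>UNIV. A t $ i $ k * matrix_inv (A t) $ k $ j) = mat 1 $ i $ j) (nhds t0)"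
      using eventually_invertible[OF dAd inv]
    proof eventually_elim
      case (elim t)
      have "(A t ** matrix_inv (A t)) $ i $ j = mat 1 $ i $ j" using matrix_inv_mult[OF elim] by simp
      then show ?case by (simp add: matrix_matrix_mult_def)
    qed
    then have "DERIV (\<lambda>t. \<Sum>k\<in>UNIV. A t $ i $ k * matrix_inv (A t) $ k $ j) t0 :> 0"
      using DERIV_cong_ev[of t0 t0 _ "\<lambda>t. mat 1 $ i $ j" 0 0] by simp
    ultimately have "(\<Sum>k\<in>UNIV. A' $ i $ k * matrix_inv (A t0) $ k $ j + D k j * A t0 $ i $ k) = 0"
      using DERIV_unique by blast
    then show ?thesis by (simp add: matrix_matrix_mult_def Dm_def B0_def sum.distrib mult.commute)
  qed
  then have "A' ** B0 + A t0 ** Dm = 0" by (simp add: vec_eq_iff)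
  then have "B0 ** (A' ** B0 + A t0 ** Dm) = 0" by simp
  then have "B0 ** A' ** B0 + Dm = 0"
    by (simp add: matrix_add_ldistrib matrix_mul_assoc matrix_inv_mult[OF inv] B0_def)
  then have "Dm = - (B0 ** A' ** B0)" by (simp add: eq_neg_iff_add_eq_0 add.commute)
  then have "Dm $ i $ j = (- (B0 ** A' ** B0)) $ i $ j" by simp
  then have "D i j = (- (B0 ** A' ** B0)) $ i $ j" by (simp add: Dm_def)
  then show ?thesis using D[of i j] unfolding B0_def by simp
qed

definition has_pd :: "'n::finite \<Rightarrow> (real^'n \<Rightarrow> real) \<Rightarrow> real \<Rightarrow> real^'n \<Rightarrow> bool" where
  "has_pd i f D x \<longleftrightarrow> ((\<lambda>t. f (x + t *\<^sub>R axis i 1)) has_real_derivative D) (at 0)"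

lemma DERIV_along_line:
  fixes f :: "real^'n::finite \<Rightarrow> real"
  assumes "f differentiable (at (x + s *\<^sub>R v))"
  shows "((\<lambda>t. f (x + t *\<^sub>R v)) has_real_derivative frechet_derivative f (at (x + s *\<^sub>R v)) v) (at s)"
proof -
  let ?f' = "frechet_derivative f (at (x + s *\<^sub>R v))"
  have df: "(f has_derivative ?f') (at (x + s *\<^sub>R v))" using assms frechet_derivative_works by blast
  have "((\<lambda>t. x + t *\<^sub>R v) has_derivative (\<lambda>t. t *\<^sub>R v)) (at s)"
    by (auto intro!: derivative_eq_intros)
  from has_derivative_compose[OF this df]
  have "((\<lambda>t. f (x + t *\<^sub>R v)) has_derivative (\<lambda>t. ?f' (t *\<^sub>R v))) (at s)" .
  moreover have "(\<lambda>t. ?f' (t *\<^sub>R v)) = (*) (?f' v)"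
    using has_derivative_linear[OF df] by (auto simp: linear_scale mult.commute)
  ultimately show ?thesis unfolding has_field_derivative_def by simp
qed

lemma DERIV_along_axis:
  fixes f :: "real^'n::finite \<Rightarrow> real"
  assumes "f differentiable (at (x + s *\<^sub>R axis i 1))"
  shows "((\<lambda>t. f (x + t *\<^sub>R axis i 1)) has_real_derivative pd i f (x + s *\<^sub>R axis i 1)) (at s)"
proof -
  have "pd i f (x + s *\<^sub>R axis i 1) = frechet_derivative f (at (x + s *\<^sub>R axis i 1)) (axis i 1)"
    using DERIV_along_line[of f "x + s *\<^sub>R axis i 1" 0 "axis i 1"] assms
    unfolding pd_def by (simp add: DERIV_imp_deriv)
  then show ?thesis using DERIV_along_line[OF assms] by simp
qed

lemma has_pd_imp_pd: "has_pd i f D x \<Longrightarrow> pd i f x = D"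
  unfolding has_pd_def pd_def by (rule DERIV_imp_deriv)

lemma has_pd_pd: "f differentiable (at x) \<Longrightarrow> has_pd i f (pd i f x) x"
  unfolding has_pd_def using DERIV_along_axis[of f x 0 i] by simp

lemma has_pd_const: "has_pd i (\<lambda>y. c) 0 x"
  unfolding has_pd_def by simp

lemma has_pd_add: "has_pd i f D x \<Longrightarrow> has_pd i g E x \<Longrightarrow> has_pd i (\<lambda>y. f y + g y) (D + E) x"
  unfolding has_pd_def by (rule DERIV_add)

lemma has_pd_diff: "has_pd i f D x \<Longrightarrow> has_pd i g E x \<Longrightarrow> has_pd i (\<lambda>y. f y - g y) (D - E) x"
  unfolding has_pd_def by (rule DERIV_diff)

lemma has_pd_minus: "has_pd i f D x \<Longrightarrow> has_pd i (\<lambda>y. - f y) (- D) x"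
  unfolding has_pd_def by (rule DERIV_minus)

lemma has_pd_mult:
  "has_pd i f D x \<Longrightarrow> has_pd i g E x \<Longrightarrow> has_pd i (\<lambda>y. f y * g y) (D * g x + E * f x) x"
  unfolding has_pd_def by (drule (1) DERIV_mult) simp

lemma has_pd_cmult: "has_pd i f D x \<Longrightarrow> has_pd i (\<lambda>y. c * f y) (c * D) x"
  unfolding has_pd_def by (rule DERIV_cmult)

lemma has_pd_sum:
  "(\<And>a. a \<in> S \<Longrightarrow> has_pd i (f a) (D a) x) \<Longrightarrow> has_pd i (\<lambda>y. \<Sum>a\<in>S. f a y) (\<Sum>a\<in>S. D a) x"
  unfolding has_pd_def by (rule DERIV_sum)

lemmas has_pd_intros = has_pd_sum has_pd_mult has_pd_add has_pd_diff has_pd_minus has_pd_const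

lemma has_pd_eq: "has_pd i f D x \<Longrightarrow> D = E \<Longrightarrow> has_pd i f E x"
  by simp

lemma eventually_line_in_open:
  fixes x v :: "real^'n::finite"
  assumes "open U" "x \<in> U"
  shows "eventually (\<lambda>t. x + t *\<^sub>R v \<in> U) (nhds (0::real))"
proof -
  have "((\<lambda>t. x + t *\<^sub>R v) \<longlongrightarrow> x) (at (0::real))"
    by (auto intro!: tendsto_eq_intros)
  then have "eventually (\<lambda>t. x + t *\<^sub>R v \<in> U) (at (0::real))"
    using assms topological_tendstoD by blast
  then show ?thesis unfolding eventually_nhds_conv_at using assms by simp
qed

lemma eventually_eq_on_line:
  fixes f f' :: "real^'n::finite \<Rightarrow> real"
  assumes "open U" "x \<in> U" "\<And>y. y \<in> U \<Longrightarrow> f y = f' y"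
  shows "eventually (\<lambda>t. f (x + t *\<^sub>R v) = f' (x + t *\<^sub>R v)) (nhds (0::real))"
  using eventually_line_in_open[OF assms(1,2), of v] by eventually_elim (simp add: assms(3))

lemma pd_cong_open:
  fixes f f' :: "real^'n::finite \<Rightarrow> real"
  assumes "open U" "x \<in> U" "\<And>y. y \<in> U \<Longrightarrow> f y = f' y"
  shows "pd i f x = pd i f' x"
proof -
  have "eventually (\<lambda>t. f (x + t *\<^sub>R axis i 1) = f' (x + t *\<^sub>R axis i 1)) (nhds 0)"
    by (rule eventually_eq_on_line) (use assms in auto)
  then show ?thesis unfolding pd_def by (rule deriv_cong_ev) simp
qed

lemma has_pd_cong_open:
  assumes "open U" "x \<in> U" "\<And>y. y \<in> U \<Longrightarrow> f y = f' y" and "has_pd i f' D x"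
  shows "has_pd i f D x"
proof -
  have "eventually (\<lambda>t. f (x + t *\<^sub>R axis i 1) = f' (x + t *\<^sub>R axis i 1)) (nhds 0)"
    by (rule eventually_eq_on_line) (use assms in auto)
  then show ?thesis
    using assms(4) unfolding has_pd_def by (subst DERIV_cong_ev[OF refl _ refl])
qed

lemma has_pd_ginv:
  fixes G :: "'n::finite metric"
  assumes "\<And>r c. has_pd i (\<lambda>y. G y r c) (D $ r $ c) x" and "invertible (\<chi> r c. G x r c)"
  shows "has_pd i (\<lambda>y. ginv G y l m)
     ((- (matrix_inv (\<chi> r c. G x r c) ** D ** matrix_inv (\<chi> r c. G x r c))) $ l $ m) x"
proof -
  let ?A = "\<lambda>t. (\<chi> r c. G (x + t *\<^sub>R axis i 1) r c)"
  have "((\<lambda>t. matrix_inv (?A t) $ l $ m) has_real_derivative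
      (- (matrix_inv (?A 0) ** D ** matrix_inv (?A 0))) $ l $ m) (at 0)"
    by (rule DERIV_matrix_inv) (use assms in \<open>auto simp: has_pd_def\<close>)
  then show ?thesis unfolding has_pd_def ginv_def by simp
qed

section \<open>Symmetry of second partial derivatives\<close>

lemma second_difference_mvt:
  fixes f :: "real^'n::finite \<Rightarrow> real"
  assumes B: "ball x r \<subseteq> U"
    and df: "\<And>y. y \<in> U \<Longrightarrow> f differentiable (at y)"
    and dfi: "\<And>y. y \<in> U \<Longrightarrow> pd i f differentiable (at y)"
    and t: "0 < t" "2 * t < r"
  shows "\<exists>y. dist y x < 2 * t \<and>
     f (x + t *\<^sub>R axis i 1 + t *\<^sub>R axis j 1) - f (x + t *\<^sub>R axis i 1) - f (x + t *\<^sub>R axis j 1) + f x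
       = t^2 * pd j (pd i f) y"
proof -
  let ?ei = "axis i 1 :: real^'n" and ?ej = "axis j 1 :: real^'n"
  have small: "norm (a *\<^sub>R ?ei + b *\<^sub>R ?ej) \<le> \<bar>a\<bar> + \<bar>b\<bar>" for a b
    using norm_triangle_ineq[of "a *\<^sub>R ?ei" "b *\<^sub>R ?ej"] by simp
  have inU: "x + a *\<^sub>R ?ei + b *\<^sub>R ?ej \<in> U" if "0 \<le> a" "a \<le> t" "0 \<le> b" "b \<le> t" for a b
  proof -
    have "norm (a *\<^sub>R ?ei + b *\<^sub>R ?ej) < r" using small[of a b] that t by simp
    then have "dist (x + a *\<^sub>R ?ei + b *\<^sub>R ?ej) x < r" by (simp add: dist_norm add.assoc)
    then show ?thesis using B by (auto simp: dist_commute)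
  qed
  define \<phi> where "\<phi> s = f ((x + t *\<^sub>R ?ej) + s *\<^sub>R ?ei) - f (x + s *\<^sub>R ?ei)" for s
  have "DERIV \<phi> s :> pd i f ((x + t *\<^sub>R ?ej) + s *\<^sub>R ?ei) - pd i f (x + s *\<^sub>R ?ei)"
    if "0 \<le> s" "s \<le> t" for s
  proof -
    have "(x + t *\<^sub>R ?ej) + s *\<^sub>R ?ei \<in> U" "x + s *\<^sub>R ?ei \<in> U"
      using inU[of s t] inU[of s 0] that t by (simp_all add: algebra_simps)
    then show ?thesis unfolding \<phi>_def by (intro DERIV_diff DERIV_along_axis df)
  qed
  from MVT2[OF t(1) this] obtain \<xi> where xi: "0 < \<xi>" "\<xi> < t"
    "\<phi> t - \<phi> 0 = (t - 0) * (pd i f ((x + t *\<^sub>R ?ej) + \<xi> *\<^sub>R ?ei) - pd i f (x + \<xi> *\<^sub>R ?ei))"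
    by blast
  define \<psi> where "\<psi> u = pd i f ((x + \<xi> *\<^sub>R ?ei) + u *\<^sub>R ?ej)" for u
  have "DERIV \<psi> u :> pd j (pd i f) ((x + \<xi> *\<^sub>R ?ei) + u *\<^sub>R ?ej)" if "0 \<le> u" "u \<le> t" for u
  proof -
    have "(x + \<xi> *\<^sub>R ?ei) + u *\<^sub>R ?ej \<in> U" using inU[of \<xi> u] that xi by simp
    then show ?thesis unfolding \<psi>_def by (intro DERIV_along_axis dfi)
  qed
  from MVT2[OF t(1) this] obtain \<eta> where eta: "0 < \<eta>" "\<eta> < t"
    "\<psi> t - \<psi> 0 = (t - 0) * pd j (pd i f) ((x + \<xi> *\<^sub>R ?ei) + \<eta> *\<^sub>R ?ej)"
    by blast
  let ?y = "(x + \<xi> *\<^sub>R ?ei) + \<eta> *\<^sub>R ?ej"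
  have "norm (\<xi> *\<^sub>R ?ei + \<eta> *\<^sub>R ?ej) < 2 * t" using small[of \<xi> \<eta>] xi eta by simp
  then have dy: "dist ?y x < 2 * t" by (simp add: dist_norm add.assoc)
  have e1: "(x + t *\<^sub>R ?ej) + \<xi> *\<^sub>R ?ei = (x + \<xi> *\<^sub>R ?ei) + t *\<^sub>R ?ej" by (simp add: algebra_simps)
  have "f (x + t *\<^sub>R ?ei + t *\<^sub>R ?ej) - f (x + t *\<^sub>R ?ei) - f (x + t *\<^sub>R ?ej) + f x = \<phi> t - \<phi> 0"
    unfolding \<phi>_def by (simp add: algebra_simps)
  also have "\<dots> = t * (\<psi> t - \<psi> 0)" using xi(3) unfolding \<psi>_def e1 by simp
  also have "\<dots> = t^2 * pd j (pd i f) ?y" using eta(3) by (simp add: power2_eq_square)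
  finally show ?thesis using dy by blast
qed

text \<open>Schwarz's theorem: both mixed partials are limits of the same second difference quotient.\<close>

lemma pd_commute:
  fixes f :: "real^'n::finite \<Rightarrow> real"
  assumes U: "open U" "x \<in> U"
    and df: "\<And>y. y \<in> U \<Longrightarrow> f differentiable (at y)"
    and dfi: "\<And>y. y \<in> U \<Longrightarrow> pd i f differentiable (at y)"
    and dfj: "\<And>y. y \<in> U \<Longrightarrow> pd j f differentiable (at y)"
    and ci: "isCont (pd j (pd i f)) x" and cj: "isCont (pd i (pd j f)) x"
  shows "pd j (pd i f) x = pd i (pd j f) x"
proof (rule ccontr)
  assume ne: "pd j (pd i f) x \<noteq> pd i (pd j f) x"
  define \<epsilon> where "\<epsilon> = \<bar>pd j (pd i f) x - pd i (pd j f) x\<bar> / 2"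
  have ep: "\<epsilon> > 0" using ne by (simp add: \<epsilon>_def)
  obtain r where r: "r > 0" "ball x r \<subseteq> U" using U openE by blast
  obtain d1 where d1: "d1 > 0" "\<And>y. dist y x < d1 \<Longrightarrow> dist (pd j (pd i f) y) (pd j (pd i f) x) < \<epsilon>"
    using ci ep unfolding continuous_at_eps_delta by blast
  obtain d2 where d2: "d2 > 0" "\<And>y. dist y x < d2 \<Longrightarrow> dist (pd i (pd j f) y) (pd i (pd j f) x) < \<epsilon>"
    using cj ep unfolding continuous_at_eps_delta by blast
  define t where "t = min r (min d1 d2) / 3"
  have t: "0 < t" "2 * t < r" "2 * t < d1" "2 * t < d2" using r d1 d2 by (auto simp: t_def)
  obtain y1 where y1: "dist y1 x < 2 * t"
    "f (x + t *\<^sub>R axis i 1 + t *\<^sub>R axis j 1) - f (x + t *\<^sub>R axis i 1) - f (x + t *\<^sub>R axis j 1) + f x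
       = t^2 * pd j (pd i f) y1"
    using second_difference_mvt[OF r(2) df dfi t(1,2)] by blast
  obtain y2 where y2: "dist y2 x < 2 * t"
    "f (x + t *\<^sub>R axis j 1 + t *\<^sub>R axis i 1) - f (x + t *\<^sub>R axis j 1) - f (x + t *\<^sub>R axis i 1) + f x
       = t^2 * pd i (pd j f) y2"
    using second_difference_mvt[OF r(2) df dfj t(1,2)] by blast
  have "x + t *\<^sub>R axis j 1 + t *\<^sub>R axis i 1 = x + t *\<^sub>R axis i 1 + t *\<^sub>R axis j 1"
    by (simp add: algebra_simps)
  with y1(2) y2(2) have "t^2 * pd j (pd i f) y1 = t^2 * pd i (pd j f) y2" by (simp add: algebra_simps)
  then have eq: "pd j (pd i f) y1 = pd i (pd j f) y2" using t by simp
  have "dist (pd j (pd i f) y1) (pd j (pd i f) x) < \<epsilon>" using d1(2) y1(1) t by simp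
  moreover have "dist (pd i (pd j f) y2) (pd i (pd j f) x) < \<epsilon>" using d2(2) y2(1) t by simp
  ultimately have "\<bar>pd j (pd i f) x - pd i (pd j f) x\<bar> < 2 * \<epsilon>"
    using eq by (simp add: dist_real_def)
  then show False by (simp add: \<epsilon>_def)
qed

lemma smooth_fun_pd:
  assumes "smooth_fun f U"
  shows "smooth_fun (pd k f) U"
  unfolding smooth_fun_def
proof (intro allI ballI)
  fix ds :: "'a list" and x assume "x \<in> U"
  then have "foldr pd (ds @ [k]) f differentiable (at x)" using assms unfolding smooth_fun_def by blast
  then show "foldr pd ds (pd k f) differentiable (at x)" by simp
qed

lemma smooth_fun_differentiable:
  assumes "smooth_fun f U" "y \<in> U"
  shows "f differentiable (at y)"
proof -
  have "foldr pd [] f differentiable (at y)" using assms unfolding smooth_fun_def by blast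
  then show ?thesis by simp
qed

lemma smooth_fun_pd_commute:
  assumes "smooth_fun f U" "open U" "x \<in> U"
  shows "pd a (pd b f) x = pd b (pd a f) x"
proof (rule pd_commute[OF assms(2,3)])
  have dd: "smooth_fun (pd a (pd b f)) U" "smooth_fun (pd b (pd a f)) U"
    using assms(1) by (simp_all add: smooth_fun_pd)
  then show "isCont (pd a (pd b f)) x" "isCont (pd b (pd a f)) x"
    using smooth_fun_differentiable assms(3) differentiable_imp_continuous_within by blast+
qed (use assms(1) smooth_fun_pd smooth_fun_differentiable in blast)+

definition lower_order :: "(real^'n::finite) set \<Rightarrow> nat \<Rightarrow> ('n metric \<Rightarrow> 'n form \<Rightarrow> real) \<Rightarrow> bool" where
  "lower_order U p \<Phi> \<longleftrightarrow>
     (\<exists>c0 c1 c2. \<forall>h F. sym_tensor h U \<and> pform p F U \<longrightarrow> \<Phi> h F = lo_comb p c0 c1 c2 h F)"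

lemma sim_at_iff_lower_order: "sim_at U p A B \<longleftrightarrow> lower_order U p (\<lambda>h F. A h F - B h F)"
  unfolding sim_at_def lower_order_def by simp

lemma lower_order_cong:
  assumes "lower_order U p \<Psi>" "\<And>h F. sym_tensor h U \<Longrightarrow> pform p F U \<Longrightarrow> \<Phi> h F = \<Psi> h F"
  shows "lower_order U p \<Phi>"
  using assms unfolding lower_order_def by metis

lemma lower_order_zero: "lower_order U p (\<lambda>h F. 0)"
proof -
  have "lo_comb p (\<lambda>i j K. 0) (\<lambda>i j l K. 0) (\<lambda>i j l K. 0) h F = 0" for h F
    unfolding lo_comb_def by simp
  then show ?thesis unfolding lower_order_def by metis
qed

lemma lower_order_add:
  assumes "lower_order U p \<Phi>" "lower_order U p \<Psi>"
  shows "lower_order U p (\<lambda>h F. \<Phi> h F + \<Psi> h F)"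
proof -
  obtain c0 c1 c2 where c: "\<forall>h F. sym_tensor h U \<and> pform p F U \<longrightarrow> \<Phi> h F = lo_comb p c0 c1 c2 h F"
    using assms(1) unfolding lower_order_def by blast
  obtain d0 d1 d2 where d: "\<forall>h F. sym_tensor h U \<and> pform p F U \<longrightarrow> \<Psi> h F = lo_comb p d0 d1 d2 h F"
    using assms(2) unfolding lower_order_def by blast
  have "lo_comb p (\<lambda>i j K. c0 i j K + d0 i j K) (\<lambda>i j l K. c1 i j l K + d1 i j l K)
      (\<lambda>i j l K. c2 i j l K + d2 i j l K) h F = lo_comb p c0 c1 c2 h F + lo_comb p d0 d1 d2 h F" for h F
    unfolding lo_comb_def by (simp add: algebra_simps sum.distrib)
  with c d show ?thesis unfolding lower_order_def
    by (intro exI[of _ "\<lambda>i j K. c0 i j K + d0 i j K"] exI[of _ "\<lambda>i j l K. c1 i j l K + d1 i j l K"]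
        exI[of _ "\<lambda>i j l K. c2 i j l K + d2 i j l K"]) simp
qed

lemma lower_order_cmult:
  assumes "lower_order U p \<Phi>"
  shows "lower_order U p (\<lambda>h F. a * \<Phi> h F)"
proof -
  obtain c0 c1 c2 where c: "\<forall>h F. sym_tensor h U \<and> pform p F U \<longrightarrow> \<Phi> h F = lo_comb p c0 c1 c2 h F"
    using assms unfolding lower_order_def by blast
  have "lo_comb p (\<lambda>i j K. a * c0 i j K) (\<lambda>i j l K. a * c1 i j l K) (\<lambda>i j l K. a * c2 i j l K) h F
      = a * lo_comb p c0 c1 c2 h F" for h F
    unfolding lo_comb_def by (simp add: algebra_simps sum_distrib_left)
  with c show ?thesis unfolding lower_order_def
    by (intro exI[of _ "\<lambda>i j K. a * c0 i j K"] exI[of _ "\<lambda>i j l K. a * c1 i j l K"]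
        exI[of _ "\<lambda>i j l K. a * c2 i j l K"]) simp
qed

lemma lower_order_neg: "lower_order U p \<Phi> \<Longrightarrow> lower_order U p (\<lambda>h F. - \<Phi> h F)"
  using lower_order_cmult[of U p \<Phi> "-1"] by simp

lemma lower_order_diff:
  "lower_order U p \<Phi> \<Longrightarrow> lower_order U p \<Psi> \<Longrightarrow> lower_order U p (\<lambda>h F. \<Phi> h F - \<Psi> h F)"
  using lower_order_add[of U p \<Phi> "\<lambda>h F. - \<Psi> h F"] lower_order_neg[of U p \<Psi>] by simp

lemma lower_order_sum:
  assumes "finite S" "\<And>x. x \<in> S \<Longrightarrow> lower_order U p (\<Phi> x)"
  shows "lower_order U p (\<lambda>h F. \<Sum>x\<in>S. \<Phi> x h F)"
  using assms by (induction S rule: finite_induct) (simp_all add: lower_order_zero lower_order_add)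

lemma lower_order_metric_form:
  fixes K :: "'n::finite list"
  assumes "length K = p"
  shows "lower_order U p (\<lambda>h F. h 0 a b * F 0 K)"
  unfolding lower_order_def
proof (intro exI allI impI)
  fix h :: "'n metric" and F :: "'n form"
  let ?c0 = "\<lambda>i j K'. if i = a \<and> j = b \<and> K' = K then 1 else (0::real)"
  have fin: "finite {K::'n list. length K = p}"
    using finite_lists_length_eq[of "UNIV::'n set" p] by simp
  have "lo_comb p ?c0 (\<lambda>i j l K. 0) (\<lambda>i j l K. 0) h F
      = (\<Sum>K'\<in>{K. length K = p}. if K' = K then h 0 a b * F 0 K' else 0)"
  proof -
    have sum_if: "(\<Sum>i\<in>S. if c then f i else 0) = (if c then \<Sum>i\<in>S. f i else (0::real))" for c S f
      by simp
    show ?thesis unfolding lo_comb_def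
      by (intro sum.cong refl) (simp add: if_distrib[of "\<lambda>x. x * _"] if_if_eq_conj[symmetric] sum_if sum.delta
          cong: if_cong)
  qed
  also have "\<dots> = h 0 a b * F 0 K" by (subst sum.delta[OF fin]) (simp add: assms)
  finally show "h 0 a b * F 0 K = lo_comb p ?c0 (\<lambda>i j l K. 0) (\<lambda>i j l K. 0) h F" by simp
qed

lemma length_del_at [simp]: "s < length I \<Longrightarrow> length (del_at s I) = length I - 1"
  unfolding del_at_def by simp

lemma nth_del_at:
  "s < length I \<Longrightarrow> k < length I - 1 \<Longrightarrow> del_at s I ! k = (if k < s then I ! k else I ! Suc k)"
  unfolding del_at_def by (auto simp: nth_append min_def)

lemma del_at_Cons_0 [simp]: "del_at 0 (x # L) = L"
  unfolding del_at_def by simp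

lemma del_at_Cons_Suc [simp]: "del_at (Suc s) (x # L) = x # del_at s L"
  unfolding del_at_def by simp

lemma del_at_update [simp]: "del_at s (I[s := l]) = del_at s I"
  unfolding del_at_def by (simp add: take_update_cancel drop_update_cancel)

lemma del_at_swap:
  assumes "Suc s < length L"
  shows "del_at s (L[s := L ! Suc s, Suc s := L ! s]) = del_at (Suc s) L"
proof (rule nth_equalityI)
  fix k assume "k < length (del_at s (L[s := L ! Suc s, Suc s := L ! s]))"
  then have "k < length L - 1" using assms by simp
  moreover have "k < s \<or> k = s \<or> k > s" by arith
  ultimately show "del_at s (L[s := L ! Suc s, Suc s := L ! s]) ! k = del_at (Suc s) L ! k"
    using assms by (auto simp add: nth_del_at nth_list_update)
qed (use assms in simp)

lemma del_at_nths:
  assumes "s < length I"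
  shows "del_at s I = nths I {i. i \<noteq> s}"
proof -
  have I: "I = take s I @ (I ! s # drop (Suc s) I)" using assms by (simp add: id_take_nth_drop)
  have "nths I {i. i \<noteq> s} = nths (take s I) {i. i \<noteq> s}
      @ nths (I ! s # drop (Suc s) I) {j. j + length (take s I) \<in> {i. i \<noteq> s}}"
    by (subst I) (rule nths_append)
  also have "nths (take s I) {i. i \<noteq> s} = take s I" by (rule nths_all) simp
  also have "length (take s I) = s" using assms by simp
  also have "nths (I ! s # drop (Suc s) I) {j. j + s \<in> {i. i \<noteq> s}} = drop (Suc s) I"
    by (simp add: nths_Cons nths_all)
  finally show ?thesis unfolding del_at_def by simp
qed

lemma del_two_nths: "del_two s t I = nths I {i. i \<noteq> s \<and> i \<noteq> t}"
proof -
  have "nths [0..<n] A = filter (\<lambda>i. i \<in> A) [0..<n]" for n A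
    by (induction n) (simp_all add: nths_append)
  then have "del_two s t I = map (nth I) (nths [0..<length I] {i. i \<noteq> s \<and> i \<noteq> t})"
    unfolding del_two_def by simp
  also have "\<dots> = nths (map (nth I) [0..<length I]) {i. i \<noteq> s \<and> i \<noteq> t}" by (simp add: nths_map)
  finally show ?thesis by (simp add: map_nth)
qed

text \<open>The position of the entry \<open>t\<close> of a list after the entry \<open>s \<noteq> t\<close> has been deleted.\<close>

definition del_pos :: "nat \<Rightarrow> nat \<Rightarrow> nat" where
  "del_pos s t = (if t < s then t else t - 1)"

lemma del_at_del_pos:
  assumes "s < length I" "t < length I" "t \<noteq> s"
  shows "del_at (del_pos s t) (del_at s I) = del_two s t I"
proof -
  have c: "card {i'. i' \<noteq> s \<and> i' < i} = (if s < i then i - 1 else i)" for i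
  proof -
    have "{i'. i' \<noteq> s \<and> i' < i} = {..<i} - {s}" by auto
    then show ?thesis by (simp add: card_Diff_singleton)
  qed
  have "del_pos s t < length (del_at s I)" using assms by (auto simp: del_pos_def)
  then have "del_at (del_pos s t) (del_at s I) = nths (nths I {i. i \<noteq> s}) {i. i \<noteq> del_pos s t}"
    using assms by (simp add: del_at_nths)
  also have "\<dots> = nths I {i. i \<noteq> s \<and> i \<noteq> t}"
    unfolding nths_nths using assms by (intro arg_cong[where f = "nths I"]) (auto simp: c del_pos_def)
  finally show ?thesis by (simp add: del_two_nths)
qed

lemma nth_del_at_del_pos:
  "s < length I \<Longrightarrow> t < length I \<Longrightarrow> t \<noteq> s \<Longrightarrow> del_at s I ! del_pos s t = I ! t"
  by (auto simp: nth_del_at del_pos_def)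

lemma update_del_at_del_pos:
  assumes "s < length I" "t < length I" "t \<noteq> s"
  shows "(del_at s I)[del_pos s t := l] = del_at s (I[t := l])"
proof (rule nth_equalityI)
  fix k assume "k < length ((del_at s I)[del_pos s t := l])"
  then have "k < length I - 1" using assms by simp
  then show "(del_at s I)[del_pos s t := l] ! k = del_at s (I[t := l]) ! k"
    using assms by (auto simp: nth_del_at nth_list_update del_pos_def)
qed (use assms in simp)

lemma minus_one_power_del_pos:
  "t \<noteq> s \<Longrightarrow> (-1::real) ^ del_pos s t = (-1) ^ (t + (if t > s then 1 else 0))"
  by (cases t) (auto simp: del_pos_def)

lemma sum_del_pos:
  assumes "s < n"
  shows "(\<Sum>u<n - 1. f u) = (\<Sum>t\<in>{..<n} - {s}. f (del_pos s t))"
  by (rule sum.reindex_bij_witness[where j = "\<lambda>u. if u < s then u else Suc u" and i = "del_pos s"])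
    (use assms in \<open>auto simp: del_pos_def\<close>)

lemma sum_off_diagonal_swap:
  "(\<Sum>s<(n::nat). \<Sum>t\<in>{..<n} - {s}. f s t) = (\<Sum>t<n. \<Sum>s\<in>{..<n} - {t}. f s t)"
proof -
  have off: "(\<Sum>t\<in>{..<n} - {s}. g t) = (\<Sum>t<n. if t = s then 0 else g t)" if "s < n" for s g
    using that by (subst sum.remove[of _ s]) (auto intro!: sum.cong)
  have "(\<Sum>s<n. \<Sum>t\<in>{..<n} - {s}. f s t) = (\<Sum>s<n. \<Sum>t<n. if t = s then 0 else f s t)"
    by (rule sum.cong[OF refl]) (simp add: off)
  also have "\<dots> = (\<Sum>t<n. \<Sum>s<n. if s = t then 0 else f s t)"
    by (subst sum.swap) (auto intro!: sum.cong)
  also have "\<dots> = (\<Sum>t<n. \<Sum>s\<in>{..<n} - {t}. f s t)"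
    by (rule sum.cong[OF refl]) (simp add: off)
  finally show ?thesis .
qed

lemma pform_swap:
  assumes "pform p F U" "x \<in> U" "length K = p" "a < b" "b < p"
  shows "F x (K[a := K ! b, b := K ! a]) = - F x K"
  using assms unfolding pform_def by blast

lemma pform_move_to_front:
  assumes F: "pform p F U" and x: "x \<in> U"
  shows "length (P @ L) = p \<Longrightarrow> s < length L \<Longrightarrow> F x (P @ L) = (-1)^s * F x (P @ (L ! s # del_at s L))"
proof (induction s arbitrary: L)
  case 0
  then have "L = L ! 0 # del_at 0 L" by (cases L) auto
  then show ?case by simp
next
  case (Suc s)
  let ?L' = "L[s := L ! Suc s, Suc s := L ! s]"
  have l': "length (P @ ?L') = p" using Suc.prems by simp
  have upd: "(P @ L)[length P + s := (P @ L) ! (length P + Suc s), length P + Suc s := (P @ L) ! (length P + s)]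
      = P @ ?L'"
    by (simp add: list_update_append nth_append)
  have "F x (P @ L) = - F x (P @ ?L')"
    using pform_swap[OF F x Suc.prems(1), of "length P + s" "length P + Suc s"] Suc.prems upd by simp
  also have "F x (P @ ?L') = (-1)^s * F x (P @ (?L' ! s # del_at s ?L'))"
    using Suc.IH[OF l'] Suc.prems by simp
  also have "?L' ! s = L ! Suc s" using Suc.prems by (simp add: nth_list_update)
  also have "del_at s ?L' = del_at (Suc s) L" using del_at_swap Suc.prems by simp
  finally show ?case by simp
qed

lemma pform_update:
  "pform p F U \<Longrightarrow> x \<in> U \<Longrightarrow> length I = p \<Longrightarrow> s < p \<Longrightarrow> F x (I[s := l]) = (-1)^s * F x (l # del_at s I)"
  using pform_move_to_front[of p F U x "[]" "I[s := l]" s] by simp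

lemma pform_update_Cons:
  "pform p F U \<Longrightarrow> x \<in> U \<Longrightarrow> length (j # K) = p \<Longrightarrow> s < length K
    \<Longrightarrow> F x (j # K[s := l]) = (-1)^s * F x (j # l # del_at s K)"
  using pform_move_to_front[of p F U x "[j]" "K[s := l]" s] by simp

lemma pform_swap_first:
  "pform p F U \<Longrightarrow> x \<in> U \<Longrightarrow> length (a # b # K) = p \<Longrightarrow> F x (a # b # K) = - F x (b # a # K)"
  using pform_swap[of p F U x "a # b # K" 0 1] by simp

section \<open>Normal coordinates\<close>

lemma mult_if_1_0: "x * (if c then 1 else 0) = (if c then x else (0::'a::semiring_1))"
  by simp

lemma if_1_0_mult: "(if c then 1 else 0) * x = (if c then x else (0::'a::semiring_1))"
  by simp

lemma if_0_mult: "(if c then x else 0) * y = (if c then x * y else (0::'a::semiring_1))"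
  by simp

lemma sum_if_0: "(\<Sum>i\<in>S. if c then f i else 0) = (if c then \<Sum>i\<in>S. f i else (0::'a::comm_monoid_add))"
  by simp

lemmas kronecker_simps = mult_if_1_0 if_1_0_mult if_0_mult sum_if_0 sum.delta sum.delta'

text \<open>Twice the Christoffel symbol of the first kind, \<open>2 \<Gamma>\<^sub>m\<^sub>j\<^sub>k\<close>, and its \<open>i\<close>-th partial derivative
  at the origin, written with the derivatives in the order in which they arise.\<close>

definition christ1 :: "'n::finite metric \<Rightarrow> real^'n \<Rightarrow> 'n \<Rightarrow> 'n \<Rightarrow> 'n \<Rightarrow> real" where
  "christ1 f y m j k = pd j (\<lambda>y. f y m k) y + pd k (\<lambda>y. f y j m) y - pd m (\<lambda>y. f y j k) y"

definition dchrist1 :: "'n::finite metric \<Rightarrow> 'n \<Rightarrow> 'n \<Rightarrow> 'n \<Rightarrow> 'n \<Rightarrow> real" where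
  "dchrist1 f i m j k =
     pd i (pd j (\<lambda>y. f y m k)) 0 + pd i (pd k (\<lambda>y. f y j m)) 0 - pd i (pd m (\<lambda>y. f y j k)) 0"

lemma christ_christ1: "christ g x l j k = (1/2) * (\<Sum>m\<in>UNIV. ginv g x l m * christ1 g x m j k)"
  unfolding christ_def christ1_def ..

lemma has_pd_christ1:
  assumes "\<And>a b. smooth_fun (\<lambda>x. f x a b) U" "0 \<in> U"
  shows "has_pd i (\<lambda>y. christ1 f y m j k) (dchrist1 f i m j k) 0"
proof -
  have "pd c (\<lambda>y. f y a b) differentiable (at 0)" for a b c
    using smooth_fun_differentiable[OF smooth_fun_pd[OF assms(1)] assms(2)] .
  then show ?thesis
    unfolding christ1_def dchrist1_def by (intro has_pd_add has_pd_diff has_pd_pd)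
qed

lemma gplus_0 [simp]: "gplus g h 0 = g"
  unfolding gplus_def by simp

locale normal_chart =
  fixes g :: "'n::finite metric" and U :: "(real^'n) set"
  assumes normal: "normal_coords g U"
begin

lemma open_U: "open U" and zero_in_U: "0 \<in> U" and riem: "riem_metric g U"
  and metric_0: "g 0 i j = (if i = j then 1 else 0)"
  using normal unfolding normal_coords_def by auto

lemma smooth_metric: "smooth_fun (\<lambda>x. g x i j) U"
  using riem unfolding riem_metric_def by blast

lemma metric_sym: "x \<in> U \<Longrightarrow> g x i j = g x j i"
  using riem unfolding riem_metric_def by blast

lemma metric_matrix_0: "(\<chi> a b. g 0 a b) = mat 1"
  by (simp add: vec_eq_iff metric_0 mat_def)

lemma ginv_0: "ginv g 0 i j = (if i = j then 1 else 0)"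
  unfolding ginv_def metric_matrix_0 matrix_inv_mat_1 by (simp add: mat_def)

lemma metric_invertible:
  assumes "x \<in> U"
  shows "invertible (\<chi> a b. g x a b)"
proof -
  have pos: "\<And>v::real^'n. v \<noteq> 0 \<Longrightarrow> (\<Sum>i\<in>UNIV. \<Sum>j\<in>UNIV. g x i j * v$i * v$j) > 0"
    using riem assms unfolding riem_metric_def by blast
  have "inj ((*v) (\<chi> a b. g x a b))"
  proof (rule injI)
    fix u v :: "real^'n" assume "(\<chi> a b. g x a b) *v u = (\<chi> a b. g x a b) *v v"
    then have z: "(\<chi> a b. g x a b) *v (u - v) = 0" by (simp add: matrix_vector_mult_diff_distrib)
    have "(\<Sum>i\<in>UNIV. \<Sum>j\<in>UNIV. g x i j * (u-v)$i * (u-v)$j)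
        = (\<Sum>i\<in>UNIV. (u-v)$i * ((\<chi> a b. g x a b) *v (u - v))$i)"
      by (simp add: matrix_vector_mult_def sum_distrib_left algebra_simps)
    also have "\<dots> = 0" using z by simp
    finally show "u = v" using pos[of "u - v"] by force
  qed
  then show ?thesis unfolding invertible_left_inverse matrix_left_invertible_injective .
qed

lemma christ_sym: "x \<in> U \<Longrightarrow> christ g x l j k = christ g x l k j"
proof -
  assume x: "x \<in> U"
  have sym: "pd a (\<lambda>y. g y b c) x = pd a (\<lambda>y. g y c b) x" for a b c
    by (rule pd_cong_open[OF open_U x]) (simp add: metric_sym)
  have "christ1 g x m j k = christ1 g x m k j" for m
    unfolding christ1_def using sym[of j m k] sym[of k j m] sym[of m j k] by linarith
  then show ?thesis unfolding christ_christ1 by simp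
qed

text \<open>The radial geodesic equation at \<open>t = 0\<close> says that the quadratic form \<open>v \<mapsto> \<Gamma>\<^sup>l\<^sub>j\<^sub>k(0) v\<^sup>j v\<^sup>k\<close>
  vanishes; by polarization and symmetry in \<open>j, k\<close> all \<open>\<Gamma>\<^sup>l\<^sub>j\<^sub>k(0)\<close> vanish.\<close>

lemma christ_0: "christ g 0 l j k = 0"
proof -
  let ?C = "\<lambda>j k. christ g 0 l j k"
  have quad: "(\<Sum>j\<in>UNIV. \<Sum>k\<in>UNIV. ?C j k * v$j * v$k) = 0" for v :: "real^'n"
  proof -
    have "\<And>t l. t *\<^sub>R v \<in> U \<Longrightarrow> (\<Sum>j\<in>UNIV. \<Sum>k\<in>UNIV. christ g (t *\<^sub>R v) l j k * v$j * v$k) = 0"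
      using normal unfolding normal_coords_def by blast
    from this[of 0 l] show ?thesis using zero_in_U by simp
  qed
  have diag: "?C a a = 0" for a
    using quad[of "axis a 1"] by (simp add: axis_def kronecker_simps)
  have off: "?C a b + ?C b a = 0" if "a \<noteq> b" for a b
  proof -
    have "(\<Sum>j\<in>UNIV. \<Sum>k\<in>UNIV. ?C j k * (axis a 1 + axis b 1 :: real^'n)$j * (axis a 1 + axis b 1 :: real^'n)$k)
        = ?C a a + ?C a b + ?C b a + ?C b b"
      using that by (simp add: axis_def ring_distribs sum.distrib kronecker_simps)
    then show ?thesis using quad[of "axis a 1 + axis b 1"] diag by simp
  qed
  show ?thesis
    using diag off[of j k] christ_sym[OF zero_in_U, of l j k] by (cases "j = k") auto
qed

lemma christ1_metric_0: "christ1 g 0 m j k = 0"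
proof -
  have "christ1 g 0 m j k = 2 * christ g 0 m j k"
    unfolding christ_christ1 ginv_0 by (simp add: kronecker_simps)
  then show ?thesis by (simp add: christ_0)
qed

lemma pd_metric_0: "pd k (\<lambda>y. g y a b) 0 = 0"
proof -
  have "pd k (\<lambda>y. g y a b) 0 = pd k (\<lambda>y. g y b a) 0"
    by (rule pd_cong_open[OF open_U zero_in_U]) (simp add: metric_sym)
  then have "christ1 g 0 a k b + christ1 g 0 b k a = 2 * pd k (\<lambda>y. g y a b) 0"
    unfolding christ1_def by simp
  then show ?thesis by (simp add: christ1_metric_0)
qed

lemma cov_metric_0: "cov g E 0 k J = pd k (\<lambda>y. E y J) 0"
  unfolding cov_def by (simp add: christ_0)

lemma has_pd_ginv_metric_0: "has_pd i (\<lambda>y. ginv g y l m) 0 0"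
proof -
  have "has_pd i (\<lambda>y. ginv g y l m)
      ((- (matrix_inv (\<chi> r c. g 0 r c) ** (0::real^'n^'n) ** matrix_inv (\<chi> r c. g 0 r c))) $ l $ m) 0"
  proof (rule has_pd_ginv)
    show "has_pd i (\<lambda>y. g y r c) ((0::real^'n^'n) $ r $ c) 0" for r c
      using has_pd_pd[OF smooth_fun_differentiable[OF smooth_metric zero_in_U], of i] pd_metric_0 by simp
  qed (simp add: metric_matrix_0 invertible_mat_1)
  then show ?thesis by simp
qed

lemma has_pd_christ_metric_0: "has_pd i (\<lambda>y. christ g y l j k) ((1/2) * dchrist1 g i l j k) 0"
  unfolding christ_christ1
  by (rule has_pd_eq, (rule has_pd_cmult has_pd_intros has_pd_ginv_metric_0
      has_pd_christ1[OF smooth_metric zero_in_U])+) (simp add: ginv_0 christ1_metric_0 kronecker_simps)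

end

section \<open>First variation of the metric quantities\<close>

lemmas DERIV_arith_intros =
  DERIV_sum DERIV_mult DERIV_add DERIV_diff DERIV_minus DERIV_const DERIV_ident

locale metric_variation = normal_chart g U for g :: "'n::finite metric" and U +
  fixes h :: "'n metric" and F :: "'n form" and p :: nat
  assumes sym_h: "sym_tensor h U" and form_F: "pform p F U"
begin

lemma smooth_h: "smooth_fun (\<lambda>x. h x i j) U"
  using sym_h unfolding sym_tensor_def by blast

lemma h_sym: "x \<in> U \<Longrightarrow> h x i j = h x j i"
  using sym_h unfolding sym_tensor_def by blast

lemma smooth_F: "length K = p \<Longrightarrow> smooth_fun (\<lambda>x. F x K) U"
  using form_F unfolding pform_def by blast

lemma pd_h_sym: "pd x (\<lambda>y. h y a b) 0 = pd x (\<lambda>y. h y b a) 0"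
  by (rule pd_cong_open[OF open_U zero_in_U]) (simp add: h_sym)

lemma pd_pd_h_sym: "pd x (pd z (\<lambda>y. h y a b)) 0 = pd x (pd z (\<lambda>y. h y b a)) 0"
  by (rule pd_cong_open[OF open_U zero_in_U], rule pd_cong_open[OF open_U]) (simp_all add: h_sym)

lemma has_pd_h: "has_pd i (\<lambda>y. h y a b) (pd i (\<lambda>y. h y a b) 0) 0"
  by (rule has_pd_pd[OF smooth_fun_differentiable[OF smooth_h zero_in_U]])

lemma has_pd_F: "length K = p \<Longrightarrow> has_pd j (\<lambda>y. F y K) (pd j (\<lambda>y. F y K) 0) 0"
  by (rule has_pd_pd[OF smooth_fun_differentiable[OF smooth_F zero_in_U]])

lemma has_pd_pd_F: "length K = p \<Longrightarrow> has_pd j (pd k (\<lambda>y. F y K)) (pd j (pd k (\<lambda>y. F y K)) 0) 0"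
  by (rule has_pd_pd[OF smooth_fun_differentiable[OF smooth_fun_pd[OF smooth_F] zero_in_U]])

lemma christ1_gplus: "y \<in> U \<Longrightarrow> christ1 (gplus g h a) y m j k = christ1 g y m j k + a * christ1 h y m j k"
proof -
  assume y: "y \<in> U"
  have "pd i (\<lambda>y. gplus g h a y r c) y = pd i (\<lambda>y. g y r c) y + a * pd i (\<lambda>y. h y r c) y" for i r c
    unfolding gplus_def
    by (intro has_pd_imp_pd has_pd_add has_pd_cmult has_pd_pd
        smooth_fun_differentiable[OF smooth_metric y] smooth_fun_differentiable[OF smooth_h y])
  then show ?thesis unfolding christ1_def by (simp add: algebra_simps)
qed

text \<open>The variation \<open>(g\<^sup>l\<^sup>m)' = - h\<^sup>l\<^sup>m\<close> of the inverse metric, with both indices of \<open>h\<close> raised by \<open>g\<close>.\<close>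

definition h_raised :: "real^'n \<Rightarrow> 'n \<Rightarrow> 'n \<Rightarrow> real" where
  "h_raised y l m = (\<Sum>v\<in>UNIV. (\<Sum>u\<in>UNIV. ginv g y l u * h y u v) * ginv g y v m)"

definition christ_var :: "real^'n \<Rightarrow> 'n \<Rightarrow> 'n \<Rightarrow> 'n \<Rightarrow> real" where
  "christ_var y l k m =
     (1/2) * (\<Sum>r\<in>UNIV. - h_raised y l r * christ1 g y r k m + ginv g y l r * christ1 h y r k m)"

definition codiff_var :: "'n form \<Rightarrow> real^'n \<Rightarrow> 'n list \<Rightarrow> real" where
  "codiff_var E y K = - (\<Sum>j\<in>UNIV. \<Sum>k\<in>UNIV. (- h_raised y j k) * cov g E y k (j # K)
     + (- (\<Sum>s<length (j # K). \<Sum>l\<in>UNIV. christ_var y l k ((j # K) ! s) * E y ((j # K)[s := l])))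
       * ginv g y j k)"

lemma DERIV_ginv_gplus:
  assumes "y \<in> U"
  shows "DERIV (\<lambda>a. ginv (gplus g h a) y l m) 0 :> - h_raised y l m"
proof -
  let ?A = "\<lambda>a. (\<chi> r c. gplus g h a y r c)"
  have "DERIV (\<lambda>a. matrix_inv (?A a) $ l $ m) 0 :>
      (- (matrix_inv (?A 0) ** (\<chi> r c. h y r c) ** matrix_inv (?A 0))) $ l $ m"
  proof (rule DERIV_matrix_inv)
    show "DERIV (\<lambda>a. ?A a $ i $ j) 0 :> (\<chi> r c. h y r c) $ i $ j" for i j
      unfolding gplus_def
      by (auto intro!: DERIV_cong[OF DERIV_add[OF DERIV_const DERIV_cmult_right[OF DERIV_ident]]])
  qed (simp add: metric_invertible[OF assms])
  then show ?thesis unfolding ginv_def h_raised_def by (simp add: matrix_matrix_mult_def)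
qed

lemma DERIV_christ_gplus:
  assumes "y \<in> U"
  shows "DERIV (\<lambda>a. christ (gplus g h a) y l k m) 0 :> christ_var y l k m"
  unfolding christ_christ1 christ1_gplus[OF assms] christ_var_def
  by (rule DERIV_cong, (rule DERIV_ginv_gplus[OF assms] DERIV_arith_intros)+) (simp add: algebra_simps)

lemma DERIV_cov_gplus:
  assumes "y \<in> U"
  shows "DERIV (\<lambda>a. cov (gplus g h a) E y k J) 0 :>
    - (\<Sum>s<length J. \<Sum>l\<in>UNIV. christ_var y l k (J ! s) * E y (J[s := l]))"
  unfolding cov_def
  by (rule DERIV_cong, (rule DERIV_christ_gplus[OF assms] DERIV_arith_intros)+) (simp add: algebra_simps)

lemma var_codiff: "y \<in> U \<Longrightarrow> var codiff g h E y K = codiff_var E y K"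
  unfolding var_def codiff_def codiff_var_def
  by (rule DERIV_imp_deriv, rule DERIV_cong,
      (rule DERIV_ginv_gplus DERIV_cov_gplus DERIV_arith_intros | assumption)+)
    simp

lemma h_raised_0: "h_raised 0 l m = h 0 l m"
  unfolding h_raised_def by (simp add: ginv_0 kronecker_simps)

lemma christ_var_0: "christ_var 0 l k m = (1/2) * christ1 h 0 l k m"
  unfolding christ_var_def by (simp add: ginv_0 kronecker_simps christ1_metric_0)

lemma var_codiff_0: "var codiff g h E 0 I =
    (\<Sum>j\<in>UNIV. \<Sum>k\<in>UNIV. h 0 j k * pd k (\<lambda>y. E y (j # I)) 0)
  + (\<Sum>j\<in>UNIV. \<Sum>s<Suc (length I). \<Sum>l\<in>UNIV. (1/2) * christ1 h 0 l j ((j # I) ! s) * E 0 ((j # I)[s := l]))"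
  unfolding var_codiff[OF zero_in_U] codiff_var_def
  by (simp add: h_raised_0 christ_var_0 cov_metric_0 ginv_0 kronecker_simps sum_negf sum.distrib sum_subtractf
      algebra_simps)

end

lemma cov2_expand:
  "cov2 g E x j k I = pd j (\<lambda>y. cov g E y k I) x
   - (\<Sum>s<Suc (length I). \<Sum>l\<in>UNIV. christ g x l j ((k # I) ! s)
        * cov g E x (hd ((k # I)[s := l])) (tl ((k # I)[s := l])))"
  unfolding cov2_def cov_def[of g "\<lambda>y L. cov g E y (hd L) (tl L)"] by simp

context metric_variation
begin

lemma DERIV_ginv_gplus_0: "DERIV (\<lambda>a. ginv (gplus g h a) 0 l m) 0 :> - h 0 l m"
  using DERIV_ginv_gplus[OF zero_in_U] by (simp add: h_raised_0)

lemma DERIV_christ_gplus_0: "DERIV (\<lambda>a. christ (gplus g h a) 0 l j k) 0 :> (1/2) * christ1 h 0 l j k"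
  using DERIV_christ_gplus[OF zero_in_U] by (simp add: christ_var_0)

lemma DERIV_cov_gplus_0:
  "DERIV (\<lambda>a. cov (gplus g h a) E 0 k J) 0 :> - (\<Sum>s<length J. \<Sum>l\<in>UNIV. (1/2) * christ1 h 0 l k (J ! s)
      * E 0 (J[s := l]))"
  using DERIV_cov_gplus[OF zero_in_U] by (simp add: christ_var_0)

lemma has_pd_cov_metric_0:
  assumes "length J = p"
  shows "has_pd i (\<lambda>y. cov g F y k J)
    (pd i (pd k (\<lambda>y. F y J)) 0 - (\<Sum>s<length J. \<Sum>l\<in>UNIV. (1/2) * dchrist1 g i l k (J ! s) * F 0 (J[s := l]))) 0"
  unfolding cov_def
  by (rule has_pd_eq, (rule has_pd_christ_metric_0 has_pd_pd_F has_pd_F has_pd_intros | simp add: assms)+)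
    (simp add: christ_0 algebra_simps)

lemma cov2_metric_0:
  assumes "length I = p"
  shows "cov2 g F 0 j k I
    = pd j (pd k (\<lambda>y. F y I)) 0 - (\<Sum>s<length I. \<Sum>l\<in>UNIV. (1/2) * dchrist1 g j l k (I ! s) * F 0 (I[s := l]))"
  unfolding cov2_expand has_pd_imp_pd[OF has_pd_cov_metric_0[OF assms]] by (simp add: christ_0)

subsection \<open>Variation of the Bochner Laplacian\<close>

text \<open>Differentiating \<open>\<nabla>\<^sup>2F\<close> in \<open>\<alpha>\<close> requires exchanging \<open>d/d\<alpha>\<close> with a partial derivative; this is
  avoided by computing the partial derivative of \<open>\<nabla>F\<close> at the origin explicitly for every \<open>\<alpha>\<close>
  near \<open>0\<close> (where \<open>g + \<alpha> h\<close> is still invertible) and differentiating the resulting expression.\<close>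

lemma eventually_invertible_gplus_0: "eventually (\<lambda>a. invertible (\<chi> r c. gplus g h a 0 r c)) (nhds 0)"
proof (rule eventually_invertible)
  show "(\<lambda>a. (\<chi> r c. gplus g h a 0 r c) $ i $ j) differentiable (at 0)" for i j
    unfolding gplus_def by (auto intro!: differentiable_add differentiable_mult)
qed (simp add: metric_matrix_0 invertible_mat_1)

lemma has_pd_christ1_gplus:
  "has_pd i (\<lambda>y. christ1 (gplus g h a) y m j k) (dchrist1 g i m j k + a * dchrist1 h i m j k) 0"
proof (rule has_pd_cong_open[OF open_U zero_in_U])
  show "has_pd i (\<lambda>y. christ1 g y m j k + a * christ1 h y m j k)
      (dchrist1 g i m j k + a * dchrist1 h i m j k) 0"
    by (intro has_pd_add has_pd_cmult has_pd_christ1[OF smooth_metric zero_in_U]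
        has_pd_christ1[OF smooth_h zero_in_U])
qed (rule christ1_gplus)

lemma has_pd_ginv_gplus:
  assumes "invertible (\<chi> r c. gplus g h a 0 r c)"
  shows "has_pd j (\<lambda>y. ginv (gplus g h a) y l r)
     (- (\<Sum>v\<in>UNIV. (\<Sum>u\<in>UNIV. ginv (gplus g h a) 0 l u * (a * pd j (\<lambda>y. h y u v) 0)) * ginv (gplus g h a) 0 v r)) 0"
proof -
  have "has_pd j (\<lambda>y. gplus g h a y r c) ((\<chi> r c. a * pd j (\<lambda>y. h y r c) 0) $ r $ c) 0" for r c
    unfolding gplus_def
    using has_pd_add[OF has_pd_pd[OF smooth_fun_differentiable[OF smooth_metric zero_in_U]]
        has_pd_cmult[OF has_pd_h]]
    by (simp add: pd_metric_0)
  from has_pd_ginv[OF this assms] show ?thesis by (simp add: matrix_matrix_mult_def ginv_def)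
qed

definition dchrist_gplus :: "real \<Rightarrow> 'n \<Rightarrow> 'n \<Rightarrow> 'n \<Rightarrow> 'n \<Rightarrow> real" where
  "dchrist_gplus a j l k m = (1/2) * (\<Sum>r\<in>UNIV.
      (- (\<Sum>v\<in>UNIV. (\<Sum>u\<in>UNIV. ginv (gplus g h a) 0 l u * (a * pd j (\<lambda>y. h y u v) 0)) * ginv (gplus g h a) 0 v r))
        * (a * christ1 h 0 r k m)
      + ginv (gplus g h a) 0 l r * (dchrist1 g j r k m + a * dchrist1 h j r k m))"

lemma has_pd_christ_gplus:
  assumes "invertible (\<chi> r c. gplus g h a 0 r c)"
  shows "has_pd j (\<lambda>y. christ (gplus g h a) y l k m) (dchrist_gplus a j l k m) 0"
  unfolding christ_christ1 dchrist_gplus_def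
  by (rule has_pd_eq, (rule has_pd_ginv_gplus[OF assms] has_pd_christ1_gplus has_pd_cmult has_pd_intros)+)
    (simp add: christ1_gplus[OF zero_in_U] christ1_metric_0 algebra_simps)

definition dchrist_var :: "'n \<Rightarrow> 'n \<Rightarrow> 'n \<Rightarrow> 'n \<Rightarrow> real" where
  "dchrist_var j l k m = (1/2) * (dchrist1 h j l k m - (\<Sum>r\<in>UNIV. h 0 l r * dchrist1 g j r k m))"

lemma DERIV_dchrist_gplus: "DERIV (\<lambda>a. dchrist_gplus a j l k m) 0 :> dchrist_var j l k m"
  unfolding dchrist_gplus_def dchrist_var_def
  by (rule DERIV_cong, (rule DERIV_ginv_gplus_0 DERIV_arith_intros)+)
    (simp add: ginv_0 kronecker_simps algebra_simps sum_subtractf)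

definition dcov_gplus :: "real \<Rightarrow> 'n \<Rightarrow> 'n \<Rightarrow> 'n list \<Rightarrow> real" where
  "dcov_gplus a j k I = pd j (pd k (\<lambda>y. F y I)) 0
     - (\<Sum>s<length I. \<Sum>l\<in>UNIV. dchrist_gplus a j l k (I ! s) * F 0 (I[s := l])
          + christ (gplus g h a) 0 l k (I ! s) * pd j (\<lambda>y. F y (I[s := l])) 0)"

lemma has_pd_cov_gplus:
  assumes "invertible (\<chi> r c. gplus g h a 0 r c)" "length I = p"
  shows "has_pd j (\<lambda>y. cov (gplus g h a) F y k I) (dcov_gplus a j k I) 0"
  unfolding cov_def dcov_gplus_def
  by (rule has_pd_eq, (rule has_pd_christ_gplus[OF assms(1)] has_pd_pd_F has_pd_F has_pd_intros
      | simp add: assms(2))+) (simp add: algebra_simps)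

lemma DERIV_pd_cov_gplus:
  assumes "length I = p"
  shows "DERIV (\<lambda>a. pd j (\<lambda>y. cov (gplus g h a) F y k I) 0) 0 :>
   - (\<Sum>s<length I. \<Sum>l\<in>UNIV. dchrist_var j l k (I ! s) * F 0 (I[s := l])
        + (1/2) * christ1 h 0 l k (I ! s) * pd j (\<lambda>y. F y (I[s := l])) 0)"
proof -
  have ev: "eventually (\<lambda>a. pd j (\<lambda>y. cov (gplus g h a) F y k I) 0 = dcov_gplus a j k I) (nhds 0)"
    using eventually_invertible_gplus_0
    by eventually_elim (rule has_pd_imp_pd[OF has_pd_cov_gplus[OF _ assms]])
  have "DERIV (\<lambda>a. dcov_gplus a j k I) 0 :>
   - (\<Sum>s<length I. \<Sum>l\<in>UNIV. dchrist_var j l k (I ! s) * F 0 (I[s := l])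
        + (1/2) * christ1 h 0 l k (I ! s) * pd j (\<lambda>y. F y (I[s := l])) 0)"
    unfolding dcov_gplus_def
    by (rule DERIV_cong, (rule DERIV_dchrist_gplus DERIV_christ_gplus_0 DERIV_arith_intros)+)
      (simp add: christ_0 algebra_simps)
  then show ?thesis using DERIV_cong_ev[OF refl ev refl] by simp
qed

definition cov2_var :: "'n \<Rightarrow> 'n \<Rightarrow> 'n list \<Rightarrow> real" where
  "cov2_var j k I =
     - (\<Sum>s<length I. \<Sum>l\<in>UNIV. dchrist_var j l k (I ! s) * F 0 (I[s := l])
          + (1/2) * christ1 h 0 l k (I ! s) * pd j (\<lambda>y. F y (I[s := l])) 0)
     - (\<Sum>s<Suc (length I). \<Sum>l\<in>UNIV. (1/2) * christ1 h 0 l j ((k # I) ! s)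
          * pd (hd ((k # I)[s := l])) (\<lambda>y. F y (tl ((k # I)[s := l]))) 0)"

lemma DERIV_cov2_gplus: "length I = p \<Longrightarrow> DERIV (\<lambda>a. cov2 (gplus g h a) F 0 j k I) 0 :> cov2_var j k I"
  unfolding cov2_expand cov2_var_def
  by (rule DERIV_cong, (rule DERIV_pd_cov_gplus DERIV_cov_gplus_0 DERIV_christ_gplus_0 DERIV_arith_intros
      | assumption)+) (simp add: christ_0 cov_metric_0 algebra_simps)

lemma var_bochner:
  assumes "length I = p"
  shows "var bochner g h F 0 I = (\<Sum>j\<in>UNIV. \<Sum>k\<in>UNIV. h 0 j k * cov2 g F 0 j k I) - (\<Sum>j\<in>UNIV. cov2_var j j I)"
  unfolding var_def bochner_def
  by (rule DERIV_imp_deriv, rule DERIV_cong, (rule DERIV_ginv_gplus_0 DERIV_cov2_gplus[OF assms]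
      DERIV_arith_intros)+) (simp add: ginv_0 kronecker_simps sum_negf sum.distrib sum_subtractf algebra_simps)

end

definition bochner_remainder :: "'n::finite metric \<Rightarrow> 'n metric \<Rightarrow> 'n form \<Rightarrow> 'n list \<Rightarrow> real" where
  "bochner_remainder g h F I =
     - (\<Sum>j\<in>UNIV. \<Sum>k\<in>UNIV. \<Sum>s<length I. \<Sum>l\<in>UNIV.
          ((1/2) * dchrist1 g j l k (I ! s)) * (h 0 j k * F 0 (I[s := l])))
     - (\<Sum>j\<in>UNIV. \<Sum>s<length I. \<Sum>l\<in>UNIV. \<Sum>r\<in>UNIV.
          ((1/2) * dchrist1 g j r j (I ! s)) * (h 0 l r * F 0 (I[s := l])))"

lemma lower_order_bochner_remainder: "lower_order U (length I) (\<lambda>h F. bochner_remainder g h F I)"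
  unfolding bochner_remainder_def
  by (intro lower_order_diff lower_order_neg lower_order_sum lower_order_cmult lower_order_metric_form)
    simp_all

context metric_variation
begin

lemma dchrist_var_mult:
  "dchrist_var j l k m * X
    = (1/2) * dchrist1 h j l k m * X - (\<Sum>r\<in>UNIV. ((1/2) * dchrist1 g j r k m) * (h 0 l r * X))"
  unfolding dchrist_var_def by (simp add: sum_distrib_left sum_distrib_right algebra_simps)

lemma pd_F_update:
  assumes "length I = p" "s < p"
  shows "pd j (\<lambda>y. F y (I[s := l])) 0 = (-1)^s * pd j (\<lambda>y. F y (l # del_at s I)) 0"
proof -
  have "pd j (\<lambda>y. F y (I[s := l])) 0 = pd j (\<lambda>y. (-1)^s * F y (l # del_at s I)) 0"
    by (rule pd_cong_open[OF open_U zero_in_U]) (rule pform_update[OF form_F _ assms])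
  also have "\<dots> = (-1)^s * pd j (\<lambda>y. F y (l # del_at s I)) 0"
    by (rule has_pd_imp_pd, rule has_pd_cmult, rule has_pd_F) (use assms in simp)
  finally show ?thesis .
qed

lemma sum_christ1_h_diag:
  "(\<Sum>j\<in>UNIV. \<Sum>l\<in>UNIV. (1/2) * christ1 h 0 l j j * pd l (\<lambda>y. F y I) 0)
   = (\<Sum>j\<in>UNIV. \<Sum>k\<in>UNIV. (pd j (\<lambda>y. h y j k) 0 - (1/2) * pd k (\<lambda>y. h y j j) 0) * pd k (\<lambda>y. F y I) 0)"
proof (intro sum.cong refl)
  fix j k
  have "pd j (\<lambda>y. h y k j) 0 = pd j (\<lambda>y. h y j k) 0" by (rule pd_h_sym)
  then show "(1/2) * christ1 h 0 k j j * pd k (\<lambda>y. F y I) 0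
      = (pd j (\<lambda>y. h y j k) 0 - (1/2) * pd k (\<lambda>y. h y j j) 0) * pd k (\<lambda>y. F y I) 0"
    unfolding christ1_def by (simp add: algebra_simps)
qed

lemma sum_christ1_h_update:
  assumes I: "length I = p"
  shows "(\<Sum>j\<in>UNIV. \<Sum>s<p. \<Sum>l\<in>UNIV. christ1 h 0 l j (I ! s) * pd j (\<lambda>y. F y (I[s := l])) 0)
   = (\<Sum>j\<in>UNIV. \<Sum>k\<in>UNIV. \<Sum>s<length I. (-1)^s *
        (pd (I ! s) (\<lambda>y. h y j k) 0 + pd j (\<lambda>y. h y (I ! s) k) 0 - pd k (\<lambda>y. h y (I ! s) j) 0)
        * pd j (\<lambda>y. F y (k # del_at s I)) 0)"
proof -
  have "christ1 h 0 l j (I ! s) * pd j (\<lambda>y. F y (I[s := l])) 0 = (-1)^s *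
        (pd (I ! s) (\<lambda>y. h y j l) 0 + pd j (\<lambda>y. h y (I ! s) l) 0 - pd l (\<lambda>y. h y (I ! s) j) 0)
        * pd j (\<lambda>y. F y (l # del_at s I)) 0" if "s < p" for j s l
    using pd_F_update[OF I that] pd_h_sym[of j l "I ! s"] pd_h_sym[of l j "I ! s"]
    unfolding christ1_def by (simp add: algebra_simps)
  then show ?thesis using I by (simp add: sum.swap[of _ "{..<p}"])
qed

lemma sum_dchrist1_h_update:
  assumes I: "length I = p"
  shows "(\<Sum>j\<in>UNIV. \<Sum>s<p. \<Sum>l\<in>UNIV. (1/2) * dchrist1 h j l j (I ! s) * F 0 (I[s := l]))
   = (1/2) * (\<Sum>j\<in>UNIV. \<Sum>k\<in>UNIV. \<Sum>s<length I. (-1)^s *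
        (pd j (pd (I ! s) (\<lambda>y. h y j k)) 0 - pd j (pd k (\<lambda>y. h y (I ! s) j)) 0
         + pd j (pd j (\<lambda>y. h y (I ! s) k)) 0) * F 0 (k # del_at s I))"
proof -
  have "(1/2) * dchrist1 h j l j (I ! s) * F 0 (I[s := l]) = (1/2) * ((-1)^s *
        (pd j (pd (I ! s) (\<lambda>y. h y j l)) 0 - pd j (pd l (\<lambda>y. h y (I ! s) j)) 0
         + pd j (pd j (\<lambda>y. h y (I ! s) l)) 0) * F 0 (l # del_at s I))" if "s < p" for j s l
    using pform_update[OF form_F zero_in_U I that] pd_pd_h_sym[of j j l "I ! s"]
      pd_pd_h_sym[of j l j "I ! s"]
    unfolding dchrist1_def by (simp add: algebra_simps)
  then show ?thesis using I by (simp add: sum.swap[of _ "{..<p}"] sum_distrib_left)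
qed

lemma neg_cov2_var_diag:
  assumes I: "length I = p"
  shows "- cov2_var j j I = (\<Sum>s<p. \<Sum>l\<in>UNIV. (1/2) * dchrist1 h j l j (I ! s) * F 0 (I[s := l]))
     - (\<Sum>s<p. \<Sum>l\<in>UNIV. \<Sum>r\<in>UNIV. ((1/2) * dchrist1 g j r j (I ! s)) * (h 0 l r * F 0 (I[s := l])))
     + (\<Sum>s<p. \<Sum>l\<in>UNIV. christ1 h 0 l j (I ! s) * pd j (\<lambda>y. F y (I[s := l])) 0)
     + (\<Sum>l\<in>UNIV. (1/2) * christ1 h 0 l j j * pd l (\<lambda>y. F y I) 0)"
proof -
  have "(\<Sum>s<Suc p. \<Sum>l\<in>UNIV. (1/2) * christ1 h 0 l j ((j # I) ! s)
          * pd (hd ((j # I)[s := l])) (\<lambda>y. F y (tl ((j # I)[s := l]))) 0)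
     = (\<Sum>l\<in>UNIV. (1/2) * christ1 h 0 l j j * pd l (\<lambda>y. F y I) 0)
     + (\<Sum>s<p. \<Sum>l\<in>UNIV. (1/2) * christ1 h 0 l j (I ! s) * pd j (\<lambda>y. F y (I[s := l])) 0)"
    unfolding sum.lessThan_Suc_shift by simp
  then have "- cov2_var j j I = (\<Sum>s<p. \<Sum>l\<in>UNIV. dchrist_var j l j (I ! s) * F 0 (I[s := l])
          + (1/2) * christ1 h 0 l j (I ! s) * pd j (\<lambda>y. F y (I[s := l])) 0)
     + ((\<Sum>l\<in>UNIV. (1/2) * christ1 h 0 l j j * pd l (\<lambda>y. F y I) 0)
     + (\<Sum>s<p. \<Sum>l\<in>UNIV. (1/2) * christ1 h 0 l j (I ! s) * pd j (\<lambda>y. F y (I[s := l])) 0))"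
    unfolding cov2_var_def I by simp
  also have "\<dots> = (\<Sum>s<p. \<Sum>l\<in>UNIV. (1/2) * dchrist1 h j l j (I ! s) * F 0 (I[s := l])
     - (\<Sum>r\<in>UNIV. ((1/2) * dchrist1 g j r j (I ! s)) * (h 0 l r * F 0 (I[s := l])))
     + christ1 h 0 l j (I ! s) * pd j (\<lambda>y. F y (I[s := l])) 0)
     + (\<Sum>l\<in>UNIV. (1/2) * christ1 h 0 l j j * pd l (\<lambda>y. F y I) 0)"
    unfolding dchrist_var_mult by (simp add: sum.distrib[symmetric] algebra_simps)
  also have "\<dots> = (\<Sum>s<p. \<Sum>l\<in>UNIV. (1/2) * dchrist1 h j l j (I ! s) * F 0 (I[s := l]))
     - (\<Sum>s<p. \<Sum>l\<in>UNIV. \<Sum>r\<in>UNIV. ((1/2) * dchrist1 g j r j (I ! s)) * (h 0 l r * F 0 (I[s := l])))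
     + (\<Sum>s<p. \<Sum>l\<in>UNIV. christ1 h 0 l j (I ! s) * pd j (\<lambda>y. F y (I[s := l])) 0)
     + (\<Sum>l\<in>UNIV. (1/2) * christ1 h 0 l j j * pd l (\<lambda>y. F y I) 0)"
    by (simp add: sum.distrib sum_subtractf)
  finally show ?thesis .
qed

lemma var_bochner_remainder:
  assumes I: "length I = p"
  shows "var bochner g h F 0 I - bochner_terms h F I = bochner_remainder g h F I"
proof -
  have principal: "(\<Sum>j\<in>UNIV. \<Sum>k\<in>UNIV. h 0 j k * cov2 g F 0 j k I)
     = (\<Sum>j\<in>UNIV. \<Sum>k\<in>UNIV. h 0 j k * pd j (pd k (\<lambda>y. F y I)) 0)
     - (\<Sum>j\<in>UNIV. \<Sum>k\<in>UNIV. \<Sum>s<length I. \<Sum>l\<in>UNIV.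
          ((1/2) * dchrist1 g j l k (I ! s)) * (h 0 j k * F 0 (I[s := l])))"
    unfolding cov2_metric_0[OF I]
    by (simp add: right_diff_distrib sum_subtractf sum_distrib_left algebra_simps)
  have trace: "- (\<Sum>j\<in>UNIV. cov2_var j j I)
     = (\<Sum>j\<in>UNIV. \<Sum>s<p. \<Sum>l\<in>UNIV. (1/2) * dchrist1 h j l j (I ! s) * F 0 (I[s := l]))
     - (\<Sum>j\<in>UNIV. \<Sum>s<p. \<Sum>l\<in>UNIV. \<Sum>r\<in>UNIV. ((1/2) * dchrist1 g j r j (I ! s)) * (h 0 l r * F 0 (I[s := l])))
     + (\<Sum>j\<in>UNIV. \<Sum>s<p. \<Sum>l\<in>UNIV. christ1 h 0 l j (I ! s) * pd j (\<lambda>y. F y (I[s := l])) 0)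
     + (\<Sum>j\<in>UNIV. \<Sum>l\<in>UNIV. (1/2) * christ1 h 0 l j j * pd l (\<lambda>y. F y I) 0)"
    unfolding sum_negf[symmetric] neg_cov2_var_diag[OF I] by (simp add: sum.distrib sum_subtractf)
  show ?thesis
    unfolding var_bochner[OF I] bochner_terms_def common_terms_def bochner_remainder_def
    using principal trace sum_christ1_h_diag sum_christ1_h_update[OF I] sum_dchrist1_h_update[OF I] I
    by simp
qed

end

lemma bochner_variation:
  assumes "normal_coords g U"
  shows "sim_at U (length I) (\<lambda>h F. var bochner g h F 0 I) (\<lambda>h F. bochner_terms h F I)"
  unfolding sim_at_iff_lower_order
proof (rule lower_order_cong[OF lower_order_bochner_remainder])
  fix h F assume "sym_tensor h U" "pform (length I) F U"
  then interpret metric_variation g U h F "length I"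
    using assms by unfold_locales
  show "var bochner g h F 0 I - bochner_terms h F I = bochner_remainder g h F I"
    by (rule var_bochner_remainder) simp
qed

lemma extd_Cons:
  "extd F x (a # J) = pd a (\<lambda>y. F y J) x
     + (\<Sum>t<length J. (-1)^(Suc t) * pd (J ! t) (\<lambda>y. F y (a # del_at t J)) x)"
  unfolding extd_def length_Cons sum.lessThan_Suc_shift by simp

context metric_variation
begin

subsection \<open>Variation of the de Rham Laplacian\<close>

lemma has_pd_h_raised_0: "has_pd i (\<lambda>y. h_raised y l m) (pd i (\<lambda>y. h y l m) 0) 0"
  unfolding h_raised_def
  by (rule has_pd_eq, (rule has_pd_ginv_metric_0 has_pd_h has_pd_intros)+) (simp add: ginv_0 kronecker_simps)

lemma has_pd_christ_var_0: "has_pd i (\<lambda>y. christ_var y l k m) (dchrist_var i l k m) 0"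
  unfolding christ_var_def dchrist_var_def
  by (rule has_pd_eq, (rule has_pd_ginv_metric_0 has_pd_h_raised_0 has_pd_christ1 smooth_metric smooth_h
      zero_in_U has_pd_intros has_pd_cmult)+)
    (simp add: ginv_0 kronecker_simps christ1_metric_0 h_raised_0 algebra_simps sum_subtractf)

definition dcodiff_var :: "'n \<Rightarrow> 'n list \<Rightarrow> real" where
  "dcodiff_var i K =
     (\<Sum>j\<in>UNIV. \<Sum>k\<in>UNIV. pd i (\<lambda>y. h y j k) 0 * pd k (\<lambda>y. F y (j # K)) 0
        + h 0 j k * (pd i (pd k (\<lambda>y. F y (j # K))) 0
            - (\<Sum>s<length (j # K). \<Sum>l\<in>UNIV. (1/2) * dchrist1 g i l k ((j # K) ! s) * F 0 ((j # K)[s := l]))))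
   + (\<Sum>j\<in>UNIV. \<Sum>s<length (j # K). \<Sum>l\<in>UNIV. dchrist_var i l j ((j # K) ! s) * F 0 ((j # K)[s := l])
        + (1/2) * christ1 h 0 l j ((j # K) ! s) * pd i (\<lambda>y. F y ((j # K)[s := l])) 0)"

lemma has_pd_codiff_var:
  assumes K: "Suc (length K) = p"
  shows "has_pd i (\<lambda>y. codiff_var F y K) (dcodiff_var i K) 0"
  unfolding codiff_var_def dcodiff_var_def
  by (rule has_pd_eq, (rule has_pd_h_raised_0 has_pd_cov_metric_0 has_pd_ginv_metric_0 has_pd_christ_var_0
      has_pd_F has_pd_intros | simp only: length_list_update list.size K add_0_right add_Suc_right)+)
    (simp add: h_raised_0 christ_var_0 cov_metric_0 sum_negf ginv_0 mult_if_1_0 if_1_0_mult,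
     simp add: sum.distrib sum_subtractf if_0_mult sum_if_0 sum.delta sum.delta',
     simp add: algebra_simps sum_negf)

lemma extd_var_codiff:
  assumes I: "length I = p"
  shows "extd (var codiff g h F) 0 I = (\<Sum>s<p. (-1)^s * dcodiff_var (I ! s) (del_at s I))"
  unfolding extd_def I
proof (rule sum.cong[OF refl])
  fix s assume s: "s \<in> {..<p}"
  have "pd (I ! s) (\<lambda>y. var codiff g h F y (del_at s I)) 0 = pd (I ! s) (\<lambda>y. codiff_var F y (del_at s I)) 0"
    by (rule pd_cong_open[OF open_U zero_in_U]) (rule var_codiff)
  also have "\<dots> = dcodiff_var (I ! s) (del_at s I)"
    by (rule has_pd_imp_pd, rule has_pd_codiff_var) (use s I in auto)
  finally show "(-1)^s * pd (I ! s) (\<lambda>y. var codiff g h F y (del_at s I)) 0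
      = (-1)^s * dcodiff_var (I ! s) (del_at s I)"
    by simp
qed

lemma pd_extd_Cons:
  assumes I: "length I = p"
  shows "pd k (\<lambda>y. extd F y (j # I)) 0 = pd k (pd j (\<lambda>y. F y I)) 0
     + (\<Sum>s<p. (-1)^(Suc s) * pd k (pd (I ! s) (\<lambda>y. F y (j # del_at s I))) 0)"
proof -
  have "has_pd k (\<lambda>y. extd F y (j # I))
      (\<Sum>s<Suc p. (-1)^s * pd k (pd ((j # I) ! s) (\<lambda>y. F y (del_at s (j # I)))) 0) 0"
    unfolding extd_def length_Cons I
    by (intro has_pd_sum has_pd_cmult has_pd_pd_F) (use I in \<open>auto simp: less_Suc_eq_0_disj\<close>)
  from has_pd_imp_pd[OF this] show ?thesis unfolding sum.lessThan_Suc_shift by simp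
qed

end

lemma sum_sum_mult_sum_swap:
  "(\<Sum>j\<in>A. \<Sum>k\<in>B. a j k * (\<Sum>s\<in>C. b s * X s j k :: real))
    = (\<Sum>s\<in>C. b s * (\<Sum>j\<in>A. \<Sum>k\<in>B. a j k * X s j k))"
proof -
  have "(\<Sum>j\<in>A. \<Sum>k\<in>B. a j k * (\<Sum>s\<in>C. b s * X s j k)) = (\<Sum>j\<in>A. \<Sum>k\<in>B. \<Sum>s\<in>C. b s * (a j k * X s j k))"
    by (simp add: sum_distrib_left mult.left_commute)
  also have "\<dots> = (\<Sum>j\<in>A. \<Sum>s\<in>C. \<Sum>k\<in>B. b s * (a j k * X s j k))"
    by (rule sum.cong[OF refl], rule sum.swap)
  also have "\<dots> = (\<Sum>s\<in>C. \<Sum>j\<in>A. \<Sum>k\<in>B. b s * (a j k * X s j k))"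
    by (rule sum.swap)
  also have "\<dots> = (\<Sum>s\<in>C. b s * (\<Sum>j\<in>A. \<Sum>k\<in>B. a j k * X s j k))"
    by (simp add: sum_distrib_left)
  finally show ?thesis .
qed

lemma sum_sum_sum_factor_middle:
  "(\<Sum>j\<in>A. \<Sum>u\<in>B. \<Sum>l\<in>C. a j u l * (b u * X j u l))
    = (\<Sum>u\<in>B. b u * (\<Sum>j\<in>A. \<Sum>l\<in>C. a j u l * (X j u l :: real)))"
proof -
  have "(\<Sum>j\<in>A. \<Sum>u\<in>B. \<Sum>l\<in>C. a j u l * (b u * X j u l)) = (\<Sum>u\<in>B. \<Sum>j\<in>A. \<Sum>l\<in>C. a j u l * (b u * X j u l))"
    by (rule sum.swap)
  also have "\<dots> = (\<Sum>u\<in>B. b u * (\<Sum>j\<in>A. \<Sum>l\<in>C. a j u l * X j u l))"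
    by (simp add: sum_distrib_left mult.left_commute)
  finally show ?thesis .
qed

lemma sum_mult_sum_mult_sum_swap:
  "(\<Sum>s\<in>S. a s * (\<Sum>t\<in>T s. b s t * (\<Sum>j\<in>A. \<Sum>l\<in>B. Y s t j l)))
    = (\<Sum>j\<in>A. \<Sum>l\<in>B. \<Sum>s\<in>S. \<Sum>t\<in>T s. a s * b s t * (Y s t j l :: real))"
proof -
  have "(\<Sum>s\<in>S. a s * (\<Sum>t\<in>T s. b s t * (\<Sum>j\<in>A. \<Sum>l\<in>B. Y s t j l)))
     = (\<Sum>s\<in>S. \<Sum>t\<in>T s. \<Sum>j\<in>A. \<Sum>l\<in>B. a s * b s t * Y s t j l)"
    by (simp add: sum_distrib_left mult.assoc)
  also have "\<dots> = (\<Sum>s\<in>S. \<Sum>j\<in>A. \<Sum>t\<in>T s. \<Sum>l\<in>B. a s * b s t * Y s t j l)"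
    by (rule sum.cong[OF refl], rule sum.swap)
  also have "\<dots> = (\<Sum>s\<in>S. \<Sum>j\<in>A. \<Sum>l\<in>B. \<Sum>t\<in>T s. a s * b s t * Y s t j l)"
    by (rule sum.cong[OF refl], rule sum.cong[OF refl], rule sum.swap)
  also have "\<dots> = (\<Sum>j\<in>A. \<Sum>s\<in>S. \<Sum>l\<in>B. \<Sum>t\<in>T s. a s * b s t * Y s t j l)"
    by (rule sum.swap)
  also have "\<dots> = (\<Sum>j\<in>A. \<Sum>l\<in>B. \<Sum>s\<in>S. \<Sum>t\<in>T s. a s * b s t * Y s t j l)"
    by (rule sum.cong[OF refl], rule sum.swap)
  finally show ?thesis .
qed

definition derham_remainder :: "'n::finite metric \<Rightarrow> 'n metric \<Rightarrow> 'n form \<Rightarrow> 'n list \<Rightarrow> real" where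
  "derham_remainder g h F I = - (\<Sum>s<length I. (-1)^s * (\<Sum>j\<in>UNIV. \<Sum>k\<in>UNIV. \<Sum>s'<length I. \<Sum>l\<in>UNIV.
        ((1/2) * dchrist1 g (I ! s) l k ((j # del_at s I) ! s')) * (h 0 j k * F 0 ((j # del_at s I)[s' := l]))))
     - (\<Sum>s<length I. (-1)^s * (\<Sum>j\<in>UNIV. \<Sum>s'<length I. \<Sum>l\<in>UNIV. \<Sum>r\<in>UNIV.
        ((1/2) * dchrist1 g (I ! s) r j ((j # del_at s I) ! s')) * (h 0 l r * F 0 ((j # del_at s I)[s' := l]))))"

lemma lower_order_derham_remainder: "lower_order U (length I) (\<lambda>h F. derham_remainder g h F I)"
  unfolding derham_remainder_def
  by (intro lower_order_diff lower_order_neg lower_order_sum lower_order_cmult lower_order_metric_form)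
    (auto split: nat.split)

context metric_variation
begin

lemma dcodiff_var_split:
  assumes K: "Suc (length K) = p"
  shows "dcodiff_var i K =
      (\<Sum>j\<in>UNIV. \<Sum>k\<in>UNIV. pd i (\<lambda>y. h y j k) 0 * pd k (\<lambda>y. F y (j # K)) 0)
    + (\<Sum>j\<in>UNIV. \<Sum>k\<in>UNIV. h 0 j k * pd i (pd k (\<lambda>y. F y (j # K))) 0)
    - (\<Sum>j\<in>UNIV. \<Sum>k\<in>UNIV. \<Sum>s<p. \<Sum>l\<in>UNIV. ((1/2) * dchrist1 g i l k ((j # K) ! s)) * (h 0 j k
        * F 0 ((j # K)[s := l])))
    + ((\<Sum>j\<in>UNIV. \<Sum>l\<in>UNIV. (1/2) * dchrist1 h i l j j * F 0 (l # K))
      + (\<Sum>j\<in>UNIV. \<Sum>u<length K. \<Sum>l\<in>UNIV. (1/2) * dchrist1 h i l j (K ! u) * F 0 (j # K[u := l])))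
    - (\<Sum>j\<in>UNIV. \<Sum>s<p. \<Sum>l\<in>UNIV. \<Sum>r\<in>UNIV. ((1/2) * dchrist1 g i r j ((j # K) ! s)) * (h 0 l r
        * F 0 ((j # K)[s := l])))
    + ((\<Sum>j\<in>UNIV. \<Sum>l\<in>UNIV. (1/2) * christ1 h 0 l j j * pd i (\<lambda>y. F y (l # K)) 0)
      + (\<Sum>j\<in>UNIV. \<Sum>u<length K. \<Sum>l\<in>UNIV. (1/2) * christ1 h 0 l j (K ! u) * pd i (\<lambda>y. F y (j # K[u := l])) 0))"
proof -
  have jK: "length (j # K) = p" for j using K by simp
  have peel: "(\<Sum>s<p. f s) = f 0 + (\<Sum>u<length K. f (Suc u))" for f :: "nat \<Rightarrow> real"
    unfolding K[symmetric] by (rule sum.lessThan_Suc_shift)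
  show ?thesis
    unfolding dcodiff_var_def jK dchrist_var_mult peel
    by (simp add: sum.distrib sum_subtractf right_diff_distrib sum_distrib_left algebra_simps)
qed

lemma pd_pd_F_commute: "length J = p \<Longrightarrow> pd a (pd b (\<lambda>y. F y J)) 0 = pd b (pd a (\<lambda>y. F y J)) 0"
  by (rule smooth_fun_pd_commute[OF smooth_F open_U zero_in_U])

lemma sum_h_pd_pd_swap: "(\<Sum>j\<in>UNIV. \<Sum>k\<in>UNIV. h 0 j k * pd k (pd j (\<lambda>y. F y I)) 0)
    = (\<Sum>j\<in>UNIV. \<Sum>k\<in>UNIV. h 0 j k * pd j (pd k (\<lambda>y. F y I)) 0)"
  by (subst sum.swap) (simp add: h_sym[OF zero_in_U])

lemma mixed_pd_terms_cancel:
  assumes I: "length I = p"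
  shows "(\<Sum>j\<in>UNIV. \<Sum>k\<in>UNIV. h 0 j k * (\<Sum>s<p. (-1)^(Suc s) * pd k (pd (I ! s) (\<lambda>y. F y (j # del_at s I))) 0))
    + (\<Sum>s<p. (-1)^s * (\<Sum>j\<in>UNIV. \<Sum>k\<in>UNIV. h 0 j k * pd (I ! s) (pd k (\<lambda>y. F y (j # del_at s I))) 0)) = 0"
proof -
  have "pd (I ! s) (pd k (\<lambda>y. F y (j # del_at s I))) 0 = pd k (pd (I ! s) (\<lambda>y. F y (j # del_at s I))) 0"
      if "s < p" for s j k
    by (rule pd_pd_F_commute) (use that I in simp)
  then have "(\<Sum>s<p. (-1)^s * (\<Sum>j\<in>UNIV. \<Sum>k\<in>UNIV. h 0 j k * pd (I ! s) (pd k (\<lambda>y. F y (j # del_at s I))) 0))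
     = (\<Sum>s<p. (-1)^s * (\<Sum>j\<in>UNIV. \<Sum>k\<in>UNIV. h 0 j k * pd k (pd (I ! s) (\<lambda>y. F y (j # del_at s I))) 0))"
    by (intro sum.cong refl) simp
  then show ?thesis unfolding sum_sum_mult_sum_swap by (simp add: sum.distrib[symmetric])
qed

lemma sum_christ1_h_diag_extd: "(\<Sum>j\<in>UNIV. \<Sum>l\<in>UNIV. (1/2) * christ1 h 0 l j j * extd F 0 (l # I))
   = (\<Sum>j\<in>UNIV. \<Sum>l\<in>UNIV. (1/2) * christ1 h 0 l j j * pd l (\<lambda>y. F y I) 0)
   + (\<Sum>j\<in>UNIV. \<Sum>l\<in>UNIV. (1/2) * christ1 h 0 l j j * (\<Sum>t<length I. (-1)^(Suc t)
       * pd (I ! t) (\<lambda>y. F y (l # del_at t I)) 0))"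
  unfolding extd_Cons by (simp add: ring_distribs sum.distrib)

lemma christ1_h_diag_terms_cancel:
  assumes I: "length I = p"
  shows "(\<Sum>j\<in>UNIV. \<Sum>l\<in>UNIV. (1/2) * christ1 h 0 l j j * (\<Sum>t<length I. (-1)^(Suc t)
      * pd (I ! t) (\<lambda>y. F y (l # del_at t I)) 0))
    + (\<Sum>s<p. (-1)^s * (\<Sum>j\<in>UNIV. \<Sum>l\<in>UNIV. (1/2) * christ1 h 0 l j j * pd (I ! s) (\<lambda>y. F y (l # del_at s I)) 0)) = 0"
  unfolding sum_sum_mult_sum_swap I by (simp add: sum.distrib[symmetric])

lemma sum_christ1_h_update_extd:
  assumes I: "length I = p"
  shows "(\<Sum>j\<in>UNIV. \<Sum>s<p. \<Sum>l\<in>UNIV. (1/2) * christ1 h 0 l j (I ! s) * extd F 0 (j # I[s := l]))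
   = (\<Sum>j\<in>UNIV. \<Sum>s<p. \<Sum>l\<in>UNIV. (1/2) * christ1 h 0 l j (I ! s) * pd j (\<lambda>y. F y (I[s := l])) 0)
   + (\<Sum>j\<in>UNIV. \<Sum>s<p. \<Sum>l\<in>UNIV. (1/2) * christ1 h 0 l j (I ! s) * ((-1)^(Suc s) * pd l (\<lambda>y. F y (j # del_at s I)) 0))
   + (\<Sum>j\<in>UNIV. \<Sum>s<p. \<Sum>l\<in>UNIV. (1/2) * christ1 h 0 l j (I ! s) * (\<Sum>t\<in>{..<p}-{s}. (-1)^(Suc t)
       * pd (I ! t) (\<lambda>y. F y (j # del_at t (I[s := l]))) 0))"
proof -
  have pt: "extd F 0 (j # I[s := l]) = pd j (\<lambda>y. F y (I[s := l])) 0
      + (-1)^(Suc s) * pd l (\<lambda>y. F y (j # del_at s I)) 0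
      + (\<Sum>t\<in>{..<p}-{s}. (-1)^(Suc t) * pd (I ! t) (\<lambda>y. F y (j # del_at t (I[s := l]))) 0)" if s: "s < p" for j s l
  proof -
    have "extd F 0 (j # I[s := l]) = pd j (\<lambda>y. F y (I[s := l])) 0
        + (\<Sum>t<p. (-1)^(Suc t) * pd ((I[s := l]) ! t) (\<lambda>y. F y (j # del_at t (I[s := l]))) 0)"
      unfolding extd_Cons using I by simp
    also have "(\<Sum>t<p. (-1)^(Suc t) * pd ((I[s := l]) ! t) (\<lambda>y. F y (j # del_at t (I[s := l]))) 0)
        = (-1)^(Suc s) * pd l (\<lambda>y. F y (j # del_at s I)) 0
          + (\<Sum>t\<in>{..<p}-{s}. (-1)^(Suc t) * pd ((I[s := l]) ! t) (\<lambda>y. F y (j # del_at t (I[s := l]))) 0)"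
      using s I by (subst sum.remove[of _ s]) auto
    also have "(\<Sum>t\<in>{..<p}-{s}. (-1)^(Suc t) * pd ((I[s := l]) ! t) (\<lambda>y. F y (j # del_at t (I[s := l]))) 0)
        = (\<Sum>t\<in>{..<p}-{s}. (-1)^(Suc t) * pd (I ! t) (\<lambda>y. F y (j # del_at t (I[s := l]))) 0)"
      by (rule sum.cong) auto
    finally show ?thesis by simp
  qed
  have "(\<Sum>j\<in>UNIV. \<Sum>s<p. \<Sum>l\<in>UNIV. (1/2) * christ1 h 0 l j (I ! s) * extd F 0 (j # I[s := l]))
     = (\<Sum>j\<in>UNIV. \<Sum>s<p. \<Sum>l\<in>UNIV. (1/2) * christ1 h 0 l j (I ! s) * pd j (\<lambda>y. F y (I[s := l])) 0
        + (1/2) * christ1 h 0 l j (I ! s) * ((-1)^(Suc s) * pd l (\<lambda>y. F y (j # del_at s I)) 0)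
        + (1/2) * christ1 h 0 l j (I ! s) * (\<Sum>t\<in>{..<p}-{s}. (-1)^(Suc t)
            * pd (I ! t) (\<lambda>y. F y (j # del_at t (I[s := l]))) 0))"
    by (intro sum.cong refl) (simp add: pt ring_distribs)
  then show ?thesis by (simp only: sum.distrib)
qed

lemma sum_christ1_h_del_at:
  assumes I: "length I = p" and s: "s < p"
  shows "(\<Sum>j\<in>UNIV. \<Sum>u<length (del_at s I). \<Sum>l\<in>UNIV.
      (1/2) * christ1 h 0 l j (del_at s I ! u) * pd (I ! s) (\<lambda>y. F y (j # (del_at s I)[u := l])) 0)
    = (\<Sum>t\<in>{..<p} - {s}. \<Sum>j\<in>UNIV. \<Sum>l\<in>UNIV.
      (1/2) * christ1 h 0 l j (I ! t) * pd (I ! s) (\<lambda>y. F y (j # del_at s (I[t := l]))) 0)"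
proof -
  have "length (del_at s I) = p - 1" using s I by simp
  then have "(\<Sum>j\<in>UNIV. \<Sum>u<length (del_at s I). \<Sum>l\<in>UNIV.
      (1/2) * christ1 h 0 l j (del_at s I ! u) * pd (I ! s) (\<lambda>y. F y (j # (del_at s I)[u := l])) 0)
    = (\<Sum>t\<in>{..<p} - {s}. \<Sum>j\<in>UNIV. \<Sum>l\<in>UNIV. (1/2) * christ1 h 0 l j (del_at s I ! del_pos s t)
        * pd (I ! s) (\<lambda>y. F y (j # (del_at s I)[del_pos s t := l])) 0)"
    by (subst sum.swap) (simp only: sum_del_pos[OF s])
  also have "\<dots> = (\<Sum>t\<in>{..<p} - {s}. \<Sum>j\<in>UNIV. \<Sum>l\<in>UNIV.
      (1/2) * christ1 h 0 l j (I ! t) * pd (I ! s) (\<lambda>y. F y (j # del_at s (I[t := l]))) 0)"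
  proof (rule sum.cong[OF refl])
    fix t assume "t \<in> {..<p} - {s}"
    then have "t < length I" "t \<noteq> s" "s < length I" using s I by auto
    then show "(\<Sum>j\<in>UNIV. \<Sum>l\<in>UNIV. (1/2) * christ1 h 0 l j (del_at s I ! del_pos s t)
        * pd (I ! s) (\<lambda>y. F y (j # (del_at s I)[del_pos s t := l])) 0)
      = (\<Sum>j\<in>UNIV. \<Sum>l\<in>UNIV. (1/2) * christ1 h 0 l j (I ! t) * pd (I ! s) (\<lambda>y. F y (j # del_at s (I[t := l]))) 0)"
      by (simp add: nth_del_at_del_pos update_del_at_del_pos)
  qed
  finally show ?thesis .
qed

text \<open>Both double sums run over pairs \<open>s \<noteq> t\<close> of positions, one with the derivative in direction
  \<open>I ! t\<close> and the Christoffel index at \<open>s\<close>, the other the other way round; exchanging \<open>s\<close> and \<open>t\<close>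
  matches them up with opposite signs.\<close>

lemma christ1_h_update_terms_cancel:
  assumes I: "length I = p"
  shows "(\<Sum>j\<in>UNIV. \<Sum>s<p. \<Sum>l\<in>UNIV. (1/2) * christ1 h 0 l j (I ! s)
        * (\<Sum>t\<in>{..<p} - {s}. (-1)^(Suc t) * pd (I ! t) (\<lambda>y. F y (j # del_at t (I[s := l]))) 0))
    + (\<Sum>s<p. (-1)^s * (\<Sum>j\<in>UNIV. \<Sum>u<length (del_at s I). \<Sum>l\<in>UNIV.
        (1/2) * christ1 h 0 l j (del_at s I ! u) * pd (I ! s) (\<lambda>y. F y (j # (del_at s I)[u := l])) 0)) = 0"
proof -
  define \<Phi> where "\<Phi> s t = (\<Sum>j\<in>UNIV. \<Sum>l\<in>UNIV.
    (1/2) * christ1 h 0 l j (I ! t) * pd (I ! s) (\<lambda>y. F y (j # del_at s (I[t := l]))) 0)" for s t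
  have "(\<Sum>j\<in>UNIV. \<Sum>s<p. \<Sum>l\<in>UNIV. (1/2) * christ1 h 0 l j (I ! s)
        * (\<Sum>t\<in>{..<p} - {s}. (-1)^(Suc t) * pd (I ! t) (\<lambda>y. F y (j # del_at t (I[s := l]))) 0))
    = (\<Sum>j\<in>UNIV. \<Sum>l\<in>UNIV. \<Sum>s<p. \<Sum>t\<in>{..<p} - {s}. 1 * (-1)^(Suc t)
        * ((1/2) * christ1 h 0 l j (I ! s) * pd (I ! t) (\<lambda>y. F y (j # del_at t (I[s := l]))) 0))"
    by (rule sum.cong[OF refl], subst sum.swap) (simp add: sum_distrib_left algebra_simps)
  also have "\<dots> = (\<Sum>s<p. 1 * (\<Sum>t\<in>{..<p} - {s}. (-1)^(Suc t) * \<Phi> t s))"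
    unfolding \<Phi>_def by (rule sum_mult_sum_mult_sum_swap[symmetric])
  also have "\<dots> = (\<Sum>s<p. \<Sum>t\<in>{..<p} - {s}. - ((-1)^s * \<Phi> s t))"
    using sum_off_diagonal_swap[of "\<lambda>s t. (-1)^(Suc t) * \<Phi> t s" p] by simp
  finally have first: "(\<Sum>j\<in>UNIV. \<Sum>s<p. \<Sum>l\<in>UNIV. (1/2) * christ1 h 0 l j (I ! s)
        * (\<Sum>t\<in>{..<p} - {s}. (-1)^(Suc t) * pd (I ! t) (\<lambda>y. F y (j # del_at t (I[s := l]))) 0))
    = (\<Sum>s<p. \<Sum>t\<in>{..<p} - {s}. - ((-1)^s * \<Phi> s t))" .
  have "(\<Sum>s<p. (-1)^s * (\<Sum>j\<in>UNIV. \<Sum>u<length (del_at s I). \<Sum>l\<in>UNIV.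
        (1/2) * christ1 h 0 l j (del_at s I ! u) * pd (I ! s) (\<lambda>y. F y (j # (del_at s I)[u := l])) 0))
     = (\<Sum>s<p. \<Sum>t\<in>{..<p} - {s}. (-1)^s * \<Phi> s t)"
    using sum_christ1_h_del_at[OF I] unfolding \<Phi>_def[symmetric]
    by (intro sum.cong refl) (simp only: lessThan_iff sum_distrib_left)
  with first show ?thesis by (simp add: sum_negf)
qed

lemma del_at_first_order_terms:
  assumes I: "length I = p"
  shows "(\<Sum>j\<in>UNIV. \<Sum>s<p. \<Sum>l\<in>UNIV. (1/2) * christ1 h 0 l j (I ! s) * ((-1)^(Suc s)
      * pd l (\<lambda>y. F y (j # del_at s I)) 0))
   + (\<Sum>s<p. (-1)^s * (\<Sum>j\<in>UNIV. \<Sum>k\<in>UNIV. pd (I ! s) (\<lambda>y. h y j k) 0 * pd k (\<lambda>y. F y (j # del_at s I)) 0))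
   = (1/2) * (\<Sum>j\<in>UNIV. \<Sum>k\<in>UNIV. \<Sum>s<length I. (-1)^s *
        (pd (I ! s) (\<lambda>y. h y j k) 0 + pd j (\<lambda>y. h y (I ! s) k) 0 - pd k (\<lambda>y. h y (I ! s) j) 0)
        * pd j (\<lambda>y. F y (k # del_at s I)) 0)"
  (is "?Q + ?A = (1/2) * ?C")
proof -
  have Q: "?Q = (\<Sum>j\<in>UNIV. \<Sum>k\<in>UNIV. \<Sum>s<p. (1/2) * christ1 h 0 j k (I ! s) * ((-1)^(Suc s)
      * pd j (\<lambda>y. F y (k # del_at s I)) 0))"
  proof -
    have "?Q = (\<Sum>k\<in>UNIV. \<Sum>j\<in>UNIV. \<Sum>s<p. (1/2) * christ1 h 0 j k (I ! s) * ((-1)^(Suc s)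
        * pd j (\<lambda>y. F y (k # del_at s I)) 0))"
      by (rule sum.cong[OF refl], rule sum.swap)
    also have "\<dots> = (\<Sum>j\<in>UNIV. \<Sum>k\<in>UNIV. \<Sum>s<p. (1/2) * christ1 h 0 j k (I ! s) * ((-1)^(Suc s)
        * pd j (\<lambda>y. F y (k # del_at s I)) 0))"
      by (rule sum.swap)
    finally show ?thesis .
  qed
  have A: "?A = (\<Sum>j\<in>UNIV. \<Sum>k\<in>UNIV. \<Sum>s<p. (-1)^s * (pd (I ! s) (\<lambda>y. h y k j) 0
      * pd j (\<lambda>y. F y (k # del_at s I)) 0))"
  proof -
    have "?A = (\<Sum>s<p. \<Sum>j\<in>UNIV. \<Sum>k\<in>UNIV. (-1)^s * (pd (I ! s) (\<lambda>y. h y j k) 0 * pd k (\<lambda>y. F y (j # del_at s I)) 0))"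
      by (simp add: sum_distrib_left)
    also have "\<dots> = (\<Sum>j\<in>UNIV. \<Sum>s<p. \<Sum>k\<in>UNIV. (-1)^s * (pd (I ! s) (\<lambda>y. h y j k) 0
        * pd k (\<lambda>y. F y (j # del_at s I)) 0))"
      by (rule sum.swap)
    also have "\<dots> = (\<Sum>j\<in>UNIV. \<Sum>k\<in>UNIV. \<Sum>s<p. (-1)^s * (pd (I ! s) (\<lambda>y. h y j k) 0
        * pd k (\<lambda>y. F y (j # del_at s I)) 0))"
      by (rule sum.cong[OF refl], rule sum.swap)
    also have "\<dots> = (\<Sum>k\<in>UNIV. \<Sum>j\<in>UNIV. \<Sum>s<p. (-1)^s * (pd (I ! s) (\<lambda>y. h y j k) 0
        * pd k (\<lambda>y. F y (j # del_at s I)) 0))"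
      by (rule sum.swap)
    finally show ?thesis by simp
  qed
  have "?Q + ?A = (\<Sum>j\<in>UNIV. \<Sum>k\<in>UNIV. \<Sum>s<p. (1/2) * christ1 h 0 j k (I ! s) * ((-1)^(Suc s)
      * pd j (\<lambda>y. F y (k # del_at s I)) 0)
      + (-1)^s * (pd (I ! s) (\<lambda>y. h y k j) 0 * pd j (\<lambda>y. F y (k # del_at s I)) 0))"
    unfolding Q A by (simp only: sum.distrib[symmetric])
  also have "\<dots> = (\<Sum>j\<in>UNIV. \<Sum>k\<in>UNIV. \<Sum>s<p. (1/2) * ((-1)^s *
      (pd (I ! s) (\<lambda>y. h y j k) 0 + pd j (\<lambda>y. h y (I ! s) k) 0 - pd k (\<lambda>y. h y (I ! s) j) 0)
      * pd j (\<lambda>y. F y (k # del_at s I)) 0))"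
  proof (intro sum.cong refl)
    fix j k s
    have e1: "pd (I ! s) (\<lambda>y. h y k j) 0 = pd (I ! s) (\<lambda>y. h y j k) 0" by (rule pd_h_sym)
    have e2: "pd k (\<lambda>y. h y j (I ! s)) 0 = pd k (\<lambda>y. h y (I ! s) j) 0" by (rule pd_h_sym)
    have e3: "pd j (\<lambda>y. h y k (I ! s)) 0 = pd j (\<lambda>y. h y (I ! s) k) 0" by (rule pd_h_sym)
    show "(1/2) * christ1 h 0 j k (I ! s) * ((-1)^(Suc s) * pd j (\<lambda>y. F y (k # del_at s I)) 0)
      + (-1)^s * (pd (I ! s) (\<lambda>y. h y k j) 0 * pd j (\<lambda>y. F y (k # del_at s I)) 0)
      = (1/2) * ((-1)^s * (pd (I ! s) (\<lambda>y. h y j k) 0 + pd j (\<lambda>y. h y (I ! s) k) 0 - pd k (\<lambda>y. h y (I ! s) j) 0)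
      * pd j (\<lambda>y. F y (k # del_at s I)) 0)"
      unfolding christ1_def e1 e2 e3 by (simp add: algebra_simps)
  qed
  also have "\<dots> = (1/2) * ?C" using I by (simp add: sum_distrib_left)
  finally show ?thesis .
qed

lemma first_order_terms:
  assumes I: "length I = p"
  shows "(\<Sum>j\<in>UNIV. \<Sum>s<p. \<Sum>l\<in>UNIV. (1/2) * christ1 h 0 l j (I ! s) * pd j (\<lambda>y. F y (I[s := l])) 0)
   + (\<Sum>j\<in>UNIV. \<Sum>s<p. \<Sum>l\<in>UNIV. (1/2) * christ1 h 0 l j (I ! s) * ((-1)^(Suc s) * pd l (\<lambda>y. F y (j # del_at s I)) 0))
   + (\<Sum>s<p. (-1)^s * (\<Sum>j\<in>UNIV. \<Sum>k\<in>UNIV. pd (I ! s) (\<lambda>y. h y j k) 0 * pd k (\<lambda>y. F y (j # del_at s I)) 0))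
   = (\<Sum>j\<in>UNIV. \<Sum>k\<in>UNIV. \<Sum>s<length I. (-1)^s *
        (pd (I ! s) (\<lambda>y. h y j k) 0 + pd j (\<lambda>y. h y (I ! s) k) 0 - pd k (\<lambda>y. h y (I ! s) j) 0)
        * pd j (\<lambda>y. F y (k # del_at s I)) 0)"
  using sum_christ1_h_update[OF I] del_at_first_order_terms[OF I]
  by (simp add: sum_divide_distrib[symmetric] add.assoc)

lemma sum_dchrist1_h_diag:
  assumes I: "length I = p"
  shows "(\<Sum>s<p. (-1)^s * (\<Sum>j\<in>UNIV. \<Sum>l\<in>UNIV. (1/2) * dchrist1 h (I ! s) l j j * F 0 (l # del_at s I)))
   = (\<Sum>j\<in>UNIV. \<Sum>k\<in>UNIV. \<Sum>s<length I. (-1)^s *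
        (pd (I ! s) (pd j (\<lambda>y. h y j k)) 0 - (1/2) * pd (I ! s) (pd k (\<lambda>y. h y j j)) 0) * F 0 (k # del_at s I))"
proof -
  have e: "dchrist1 h i l j j = 2 * pd i (pd j (\<lambda>y. h y j l)) 0 - pd i (pd l (\<lambda>y. h y j j)) 0" for i l j
    using pd_pd_h_sym[of i j l j] unfolding dchrist1_def by simp
  have "(\<Sum>s<p. (-1)^s * (\<Sum>j\<in>UNIV. \<Sum>l\<in>UNIV. (1/2) * dchrist1 h (I ! s) l j j * F 0 (l # del_at s I)))
     = (\<Sum>s<p. \<Sum>j\<in>UNIV. \<Sum>l\<in>UNIV. (-1)^s * (pd (I ! s) (pd j (\<lambda>y. h y j l)) 0
         - (1/2) * pd (I ! s) (pd l (\<lambda>y. h y j j)) 0) * F 0 (l # del_at s I))"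
    by (simp add: sum_distrib_left e algebra_simps)
  also have "\<dots> = (\<Sum>j\<in>UNIV. \<Sum>s<p. \<Sum>l\<in>UNIV. (-1)^s * (pd (I ! s) (pd j (\<lambda>y. h y j l)) 0
      - (1/2) * pd (I ! s) (pd l (\<lambda>y. h y j j)) 0) * F 0 (l # del_at s I))"
    by (rule sum.swap)
  also have "\<dots> = (\<Sum>j\<in>UNIV. \<Sum>l\<in>UNIV. \<Sum>s<p. (-1)^s * (pd (I ! s) (pd j (\<lambda>y. h y j l)) 0
      - (1/2) * pd (I ! s) (pd l (\<lambda>y. h y j j)) 0) * F 0 (l # del_at s I))"
    by (rule sum.cong[OF refl], rule sum.swap)
  finally show ?thesis using I by simp
qed

text \<open>Of the three second derivatives making up \<open>dchrist1 h i l j m\<close>, the one symmetric in \<open>j, l\<close>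
  dies against the antisymmetric \<open>F\<close>, and the other two agree after exchanging \<open>j\<close> and \<open>l\<close>.\<close>

lemma sum_dchrist1_h_antisym:
  assumes R: "Suc (Suc (length R)) = p"
  shows "(\<Sum>j\<in>UNIV. \<Sum>l\<in>UNIV. (1/2) * dchrist1 h i l j m * F 0 (j # l # R))
       = (\<Sum>j\<in>UNIV. \<Sum>l\<in>UNIV. pd i (pd j (\<lambda>y. h y m l)) 0 * F 0 (j # l # R))"
proof -
  let ?P = "\<lambda>j l. F 0 (j # l # R)"
  let ?X = "\<lambda>j l. pd i (pd j (\<lambda>y. h y l m)) 0"
  let ?S = "\<lambda>j l. pd i (pd m (\<lambda>y. h y j l)) 0"
  have anti: "?P l j = - ?P j l" for j l using pform_swap_first[OF form_F zero_in_U, of l j R] R by simp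
  have sw: "?S j l * ?P j l = - (?S l j * ?P l j)" for j l
    using anti[of l j] pd_pd_h_sym[of i m j l] by simp
  have sw2: "?X l j * ?P j l = - (?X l j * ?P l j)" for j l
    using anti[of l j] by simp
  have S0: "(\<Sum>j\<in>UNIV. \<Sum>l\<in>UNIV. ?S j l * ?P j l) = 0"
  proof -
    have "(\<Sum>j\<in>UNIV. \<Sum>l\<in>UNIV. ?S j l * ?P j l) = (\<Sum>l\<in>UNIV. \<Sum>j\<in>UNIV. ?S j l * ?P j l)" by (rule sum.swap)
    also have "\<dots> = (\<Sum>l\<in>UNIV. \<Sum>j\<in>UNIV. - (?S l j * ?P l j))"
      by (intro sum.cong refl) (rule sw)
    finally show ?thesis by (simp add: sum_negf)
  qed
  have Y: "(\<Sum>j\<in>UNIV. \<Sum>l\<in>UNIV. ?X l j * ?P j l) = - (\<Sum>j\<in>UNIV. \<Sum>l\<in>UNIV. ?X j l * ?P j l)"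
  proof -
    have "(\<Sum>j\<in>UNIV. \<Sum>l\<in>UNIV. ?X l j * ?P j l) = (\<Sum>l\<in>UNIV. \<Sum>j\<in>UNIV. ?X l j * ?P j l)" by (rule sum.swap)
    also have "\<dots> = (\<Sum>l\<in>UNIV. \<Sum>j\<in>UNIV. - (?X l j * ?P l j))"
      by (intro sum.cong refl) (rule sw2)
    finally show ?thesis by (simp add: sum_negf)
  qed
  have "(\<Sum>j\<in>UNIV. \<Sum>l\<in>UNIV. (1/2) * dchrist1 h i l j m * F 0 (j # l # R))
     = (1/2) * (\<Sum>j\<in>UNIV. \<Sum>l\<in>UNIV. ?X j l * ?P j l) + (1/2) * (\<Sum>j\<in>UNIV. \<Sum>l\<in>UNIV. ?S j l * ?P j l)
       - (1/2) * (\<Sum>j\<in>UNIV. \<Sum>l\<in>UNIV. ?X l j * ?P j l)"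
    unfolding dchrist1_def by (simp add: sum_distrib_left sum.distrib sum_subtractf algebra_simps)
  also have "\<dots> = (\<Sum>j\<in>UNIV. \<Sum>l\<in>UNIV. ?X j l * ?P j l)" unfolding S0 Y by simp
  also have "\<dots> = (\<Sum>j\<in>UNIV. \<Sum>l\<in>UNIV. pd i (pd j (\<lambda>y. h y m l)) 0 * F 0 (j # l # R))"
  proof -
    have e: "?X j l = pd i (pd j (\<lambda>y. h y m l)) 0" for j l by (rule pd_pd_h_sym)
    show ?thesis by (simp only: e)
  qed
  finally show ?thesis .
qed

lemma sum_dchrist1_h_del_at:
  assumes I: "length I = p" and s: "s < p"
  shows "(\<Sum>j\<in>UNIV. \<Sum>u<length (del_at s I). \<Sum>l\<in>UNIV.
      (1/2) * dchrist1 h (I ! s) l j (del_at s I ! u) * F 0 (j # (del_at s I)[u := l]))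
    = (\<Sum>t\<in>{..<p} - {s}. (-1)^(t + (if t > s then 1 else 0)) *
      (\<Sum>j\<in>UNIV. \<Sum>l\<in>UNIV. pd (I ! s) (pd j (\<lambda>y. h y (I ! t) l)) 0 * F 0 (j # l # del_two s t I)))"
proof -
  let ?K = "del_at s I"
  have lK: "length ?K = p - 1" using s I by simp
  have "(\<Sum>j\<in>UNIV. \<Sum>u<length ?K. \<Sum>l\<in>UNIV. (1/2) * dchrist1 h (I ! s) l j (?K ! u) * F 0 (j # ?K[u := l]))
     = (\<Sum>j\<in>UNIV. \<Sum>u<length ?K. \<Sum>l\<in>UNIV.
         (1/2) * dchrist1 h (I ! s) l j (?K ! u) * ((-1)^u * F 0 (j # l # del_at u ?K)))"
    using s I by (intro sum.cong refl) (simp add: pform_update_Cons[OF form_F zero_in_U])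
  also have "\<dots> = (\<Sum>u<length ?K. (-1)^u * (\<Sum>j\<in>UNIV. \<Sum>l\<in>UNIV.
      (1/2) * dchrist1 h (I ! s) l j (?K ! u) * F 0 (j # l # del_at u ?K)))"
    by (rule sum_sum_sum_factor_middle)
  also have "\<dots> = (\<Sum>u<length ?K. (-1)^u * (\<Sum>j\<in>UNIV. \<Sum>l\<in>UNIV.
      pd (I ! s) (pd j (\<lambda>y. h y (?K ! u) l)) 0 * F 0 (j # l # del_at u ?K)))"
    using s I by (intro sum.cong refl arg_cong[where f = "\<lambda>x. _ * x"] sum_dchrist1_h_antisym) auto
  also have "\<dots> = (\<Sum>t\<in>{..<p} - {s}. (-1)^(del_pos s t) * (\<Sum>j\<in>UNIV. \<Sum>l\<in>UNIV.
      pd (I ! s) (pd j (\<lambda>y. h y (?K ! del_pos s t) l)) 0 * F 0 (j # l # del_at (del_pos s t) ?K)))"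
    unfolding lK by (rule sum_del_pos[OF s])
  also have "\<dots> = (\<Sum>t\<in>{..<p} - {s}. (-1)^(t + (if t > s then 1 else 0)) *
      (\<Sum>j\<in>UNIV. \<Sum>l\<in>UNIV. pd (I ! s) (pd j (\<lambda>y. h y (I ! t) l)) 0 * F 0 (j # l # del_two s t I)))"
  proof (rule sum.cong[OF refl])
    fix t assume "t \<in> {..<p} - {s}"
    then have tt: "t < length I" "t \<noteq> s" and ss: "s < length I" using s I by auto
    then show "(-1)^(del_pos s t) * (\<Sum>j\<in>UNIV. \<Sum>l\<in>UNIV.
        pd (I ! s) (pd j (\<lambda>y. h y (?K ! del_pos s t) l)) 0 * F 0 (j # l # del_at (del_pos s t) ?K))
      = (-1)^(t + (if t > s then 1 else 0)) *
        (\<Sum>j\<in>UNIV. \<Sum>l\<in>UNIV. pd (I ! s) (pd j (\<lambda>y. h y (I ! t) l)) 0 * F 0 (j # l # del_two s t I))"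
      by (simp add: minus_one_power_del_pos nth_del_at_del_pos del_at_del_pos)
  qed
  finally show ?thesis .
qed

lemma sum_dchrist1_h_del_two:
  assumes I: "length I = p"
  shows "(\<Sum>s<p. (-1)^s * (\<Sum>j\<in>UNIV. \<Sum>u<length (del_at s I). \<Sum>l\<in>UNIV.
      (1/2) * dchrist1 h (I ! s) l j (del_at s I ! u) * F 0 (j # (del_at s I)[u := l])))
   = (\<Sum>j\<in>UNIV. \<Sum>k\<in>UNIV. \<Sum>s<length I. \<Sum>t\<in>{..<length I} - {s}.
      (-1)^(s + t + (if t > s then 1 else 0)) * pd (I ! s) (pd j (\<lambda>y. h y (I ! t) k)) 0
        * F 0 (j # k # del_two s t I))"
proof -
  have "(\<Sum>s<p. (-1)^s * (\<Sum>j\<in>UNIV. \<Sum>u<length (del_at s I). \<Sum>l\<in>UNIV.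
      (1/2) * dchrist1 h (I ! s) l j (del_at s I ! u) * F 0 (j # (del_at s I)[u := l])))
    = (\<Sum>s<p. (-1)^s * (\<Sum>t\<in>{..<p} - {s}. (-1)^(t + (if t > s then 1 else 0)) *
      (\<Sum>j\<in>UNIV. \<Sum>l\<in>UNIV. pd (I ! s) (pd j (\<lambda>y. h y (I ! t) l)) 0 * F 0 (j # l # del_two s t I))))"
    by (rule sum.cong[OF refl]) (simp only: sum_dchrist1_h_del_at[OF I] lessThan_iff)
  also have "\<dots> = (\<Sum>j\<in>UNIV. \<Sum>l\<in>UNIV. \<Sum>s<p. \<Sum>t\<in>{..<p} - {s}. (-1)^s * (-1)^(t + (if t > s then 1 else 0)) *
      (pd (I ! s) (pd j (\<lambda>y. h y (I ! t) l)) 0 * F 0 (j # l # del_two s t I)))"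
    by (rule sum_mult_sum_mult_sum_swap)
  also have "\<dots> = (\<Sum>j\<in>UNIV. \<Sum>k\<in>UNIV. \<Sum>s<length I. \<Sum>t\<in>{..<length I} - {s}.
      (-1)^(s + t + (if t > s then 1 else 0)) * pd (I ! s) (pd j (\<lambda>y. h y (I ! t) k)) 0
        * F 0 (j # k # del_two s t I))"
    unfolding I by (intro sum.cong refl) (simp add: power_add)
  finally show ?thesis .
qed

lemma sum_dcodiff_var_split:
  assumes I: "length I = p"
  shows "(\<Sum>s<p. (-1)^s * dcodiff_var (I ! s) (del_at s I)) =
      (\<Sum>s<p. (-1)^s * (\<Sum>j\<in>UNIV. \<Sum>k\<in>UNIV. pd (I ! s) (\<lambda>y. h y j k) 0 * pd k (\<lambda>y. F y (j # del_at s I)) 0))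
    + (\<Sum>s<p. (-1)^s * (\<Sum>j\<in>UNIV. \<Sum>k\<in>UNIV. h 0 j k * pd (I ! s) (pd k (\<lambda>y. F y (j # del_at s I))) 0))
    - (\<Sum>s<p. (-1)^s * (\<Sum>j\<in>UNIV. \<Sum>k\<in>UNIV. \<Sum>s'<p. \<Sum>l\<in>UNIV. ((1/2) * dchrist1 g (I ! s) l k ((j # del_at s I) !
        s')) * (h 0 j k * F 0 ((j # del_at s I)[s' := l]))))
    + (\<Sum>s<p. (-1)^s * (\<Sum>j\<in>UNIV. \<Sum>l\<in>UNIV. (1/2) * dchrist1 h (I ! s) l j j * F 0 (l # del_at s I)))
    + (\<Sum>s<p. (-1)^s * (\<Sum>j\<in>UNIV. \<Sum>u<length (del_at s I). \<Sum>l\<in>UNIV. (1/2)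
        * dchrist1 h (I ! s) l j ((del_at s I) ! u) * F 0 (j # (del_at s I)[u := l])))
    - (\<Sum>s<p. (-1)^s * (\<Sum>j\<in>UNIV. \<Sum>s'<p. \<Sum>l\<in>UNIV. \<Sum>r\<in>UNIV. ((1/2) * dchrist1 g (I ! s) r j ((j # del_at s I) !
        s')) * (h 0 l r * F 0 ((j # del_at s I)[s' := l]))))
    + (\<Sum>s<p. (-1)^s * (\<Sum>j\<in>UNIV. \<Sum>l\<in>UNIV. (1/2) * christ1 h 0 l j j * pd (I ! s) (\<lambda>y. F y (l # del_at s I)) 0))
    + (\<Sum>s<p. (-1)^s * (\<Sum>j\<in>UNIV. \<Sum>u<length (del_at s I). \<Sum>l\<in>UNIV. (1/2) * christ1 h 0 l j ((del_at s I) ! u)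
        * pd (I ! s) (\<lambda>y. F y (j # (del_at s I)[u := l])) 0))"
proof -
  have "(\<Sum>s<p. (-1)^s * dcodiff_var (I ! s) (del_at s I)) = (\<Sum>s<p.
       (-1)^s * (\<Sum>j\<in>UNIV. \<Sum>k\<in>UNIV. pd (I ! s) (\<lambda>y. h y j k) 0 * pd k (\<lambda>y. F y (j # del_at s I)) 0)
     + (-1)^s * (\<Sum>j\<in>UNIV. \<Sum>k\<in>UNIV. h 0 j k * pd (I ! s) (pd k (\<lambda>y. F y (j # del_at s I))) 0)
     - (-1)^s * (\<Sum>j\<in>UNIV. \<Sum>k\<in>UNIV. \<Sum>s'<p. \<Sum>l\<in>UNIV. ((1/2) * dchrist1 g (I ! s) l k ((j # del_at s I) ! s'))
         * (h 0 j k * F 0 ((j # del_at s I)[s' := l])))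
     + (-1)^s * (\<Sum>j\<in>UNIV. \<Sum>l\<in>UNIV. (1/2) * dchrist1 h (I ! s) l j j * F 0 (l # del_at s I))
     + (-1)^s * (\<Sum>j\<in>UNIV. \<Sum>u<length (del_at s I). \<Sum>l\<in>UNIV. (1/2) * dchrist1 h (I ! s) l j ((del_at s I) ! u)
         * F 0 (j # (del_at s I)[u := l]))
     - (-1)^s * (\<Sum>j\<in>UNIV. \<Sum>s'<p. \<Sum>l\<in>UNIV. \<Sum>r\<in>UNIV. ((1/2) * dchrist1 g (I ! s) r j ((j # del_at s I) ! s'))
         * (h 0 l r * F 0 ((j # del_at s I)[s' := l])))
     + (-1)^s * (\<Sum>j\<in>UNIV. \<Sum>l\<in>UNIV. (1/2) * christ1 h 0 l j j * pd (I ! s) (\<lambda>y. F y (l # del_at s I)) 0)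
     + (-1)^s * (\<Sum>j\<in>UNIV. \<Sum>u<length (del_at s I). \<Sum>l\<in>UNIV. (1/2) * christ1 h 0 l j ((del_at s I) ! u)
         * pd (I ! s) (\<lambda>y. F y (j # (del_at s I)[u := l])) 0))"
  proof (rule sum.cong[OF refl], goal_cases)
    case (1 s)
    then have "Suc (length (del_at s I)) = p" using I by auto
    then show ?case
      by (simp only: dcodiff_var_split ring_distribs)
  qed
  then show ?thesis by (simp only: sum.distrib sum_subtractf)
qed

lemma derham_var_remainder:
  assumes I: "length I = p"
  shows "derham_var g h F 0 I - derham_terms h F I = derham_remainder g h F I"
proof -
  have T1a: "(\<Sum>j\<in>UNIV. \<Sum>k\<in>UNIV. h 0 j k * pd k (\<lambda>y. extd F y (j # I)) 0)
     = (\<Sum>j\<in>UNIV. \<Sum>k\<in>UNIV. h 0 j k * pd k (pd j (\<lambda>y. F y I)) 0)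
     + (\<Sum>j\<in>UNIV. \<Sum>k\<in>UNIV. h 0 j k * (\<Sum>s<p. (-1)^(Suc s) * pd k (pd (I ! s) (\<lambda>y. F y (j # del_at s I))) 0))"
    by (simp only: pd_extd_Cons[OF I] ring_distribs sum.distrib)
  have T1b: "(\<Sum>j\<in>UNIV. \<Sum>s<Suc (length I). \<Sum>l\<in>UNIV. (1/2) * christ1 h 0 l j ((j # I) ! s)
      * extd F 0 ((j # I)[s := l]))
     = (\<Sum>j\<in>UNIV. \<Sum>l\<in>UNIV. (1/2) * christ1 h 0 l j j * extd F 0 (l # I))
     + (\<Sum>j\<in>UNIV. \<Sum>s<p. \<Sum>l\<in>UNIV. (1/2) * christ1 h 0 l j (I ! s) * extd F 0 (j # I[s := l]))"
    unfolding sum.lessThan_Suc_shift I by (simp add: sum.distrib)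
  have main: "derham_var g h F 0 I =
      (\<Sum>j\<in>UNIV. \<Sum>k\<in>UNIV. h 0 j k * pd k (\<lambda>y. extd F y (j # I)) 0)
    + (\<Sum>j\<in>UNIV. \<Sum>s<Suc (length I). \<Sum>l\<in>UNIV. (1/2) * christ1 h 0 l j ((j # I) ! s) * extd F 0 ((j # I)[s := l]))
    + (\<Sum>s<p. (-1)^s * dcodiff_var (I ! s) (del_at s I))"
    unfolding derham_var_def var_codiff_0 extd_var_codiff[OF I] ..
  show ?thesis
    unfolding main T1a T1b sum_dcodiff_var_split[OF I] sum_christ1_h_diag_extd sum_christ1_h_update_extd[OF I]
      derham_terms_def common_terms_def derham_remainder_def
    using sum_h_pd_pd_swap mixed_pd_terms_cancel[OF I] christ1_h_diag_terms_cancel[OF I] sum_christ1_h_diag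
      christ1_h_update_terms_cancel[OF I] first_order_terms[OF I] sum_dchrist1_h_diag[OF I]
      sum_dchrist1_h_del_two[OF I] I
    by simp
qed

end

lemma derham_variation:
  assumes "normal_coords g U"
  shows "sim_at U (length I) (\<lambda>h F. derham_var g h F 0 I) (\<lambda>h F. derham_terms h F I)"
  unfolding sim_at_iff_lower_order
proof (rule lower_order_cong[OF lower_order_derham_remainder])
  fix h F assume "sym_tensor h U" "pform (length I) F U"
  then interpret metric_variation g U h F "length I"
    using assms by unfold_locales
  show "derham_var g h F 0 I - derham_terms h F I = derham_remainder g h F I"
    by (rule derham_var_remainder) simp
qed

theorem lemma3p1:
  fixes g :: "'n::finite metric" and U :: "(real^'n) set" and I :: "'n list"
  assumes "normal_coords g U"
  shows "sim_at U (length I) (\<lambda>h F. var bochner g h F 0 I) (\<lambda>h F. bochner_terms h F I)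
       \<and> sim_at U (length I) (\<lambda>h F. derham_var g h F 0 I) (\<lambda>h F. derham_terms h F I)"
  using bochner_variation[OF assms] derham_variation[OF assms] by blast

thm_deps lemma3p1

end
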